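(* Let $G$ be a finite group and $H \le G$ a subgroup with $H \neq \{e\}$. Let $C_{\min}$ be a non-identity conjugacy class of $G$ of minimal size among the non-identity conjugacy classes that intersect $H$ non-trivially. Then \[ |H|^{-1}|C_{\min}|^{-1} < D_H \le (|H|-1)\,|C_{\min}|^{-1/2}. \]
   Context: For a finite group $G$, let $\mathrm{Irr}(G)$ be its set of complex irreducible characters and $d_\chi=\chi(e)$. For $H \le G$ let $D_H = \frac{1}{|G|}\sum_{\chi \in \mathrm{Irr}(G)} d_\chi \big|\sum_{h \in H, h \neq e}\chi(h)\big|$, the $L_1$ distance between the distributions $P_H(\chi)=\frac{d_\chi}{|G|}\sum_{h\in H}\chi(h)$ and $P_{\{e\}}$ on $\mathrm{Irr}(G)$. *)

theory Defs
  imports "HOL-Algebra.Group" "Jordan_Normal_Form.Matrix"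
begin

definition is_rep :: "('a, 'b) monoid_scheme \<Rightarrow> nat \<Rightarrow> ('a \<Rightarrow> complex mat) \<Rightarrow> bool" where
  "is_rep G n \<rho> \<longleftrightarrow> n > 0
     \<and> (\<forall>g \<in> carrier G. \<rho> g \<in> carrier_mat n n)
     \<and> (\<forall>g \<in> carrier G. \<forall>h \<in> carrier G. \<rho> (g \<otimes>\<^bsub>G\<^esub> h) = \<rho> g * \<rho> h)
     \<and> \<rho> \<one>\<^bsub>G\<^esub> = 1\<^sub>m n"

definition is_subspace :: "nat \<Rightarrow> complex vec set \<Rightarrow> bool" where
  "is_subspace n W \<longleftrightarrow> W \<subseteq> carrier_vec n \<and> 0\<^sub>v n \<in> W
     \<and> (\<forall>v \<in> W. \<forall>w \<in> W. v + w \<in> W)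
     \<and> (\<forall>c::complex. \<forall>w \<in> W. c \<cdot>\<^sub>v w \<in> W)"

definition irreducible_rep :: "('a, 'b) monoid_scheme \<Rightarrow> nat \<Rightarrow> ('a \<Rightarrow> complex mat) \<Rightarrow> bool" where
  "irreducible_rep G n \<rho> \<longleftrightarrow> is_rep G n \<rho>
     \<and> (\<forall>W. is_subspace n W \<and> (\<forall>g \<in> carrier G. \<forall>w \<in> W. \<rho> g *\<^sub>v w \<in> W)
            \<longrightarrow> W = {0\<^sub>v n} \<or> W = carrier_vec n)"

definition mat_trace :: "complex mat \<Rightarrow> complex" where
  "mat_trace A = (\<Sum>i < dim_row A. A $$ (i, i))"

definition Irr :: "('a, 'b) monoid_scheme \<Rightarrow> ('a \<Rightarrow> complex) set" where
  "Irr G = {\<chi>. \<exists>n \<rho>. irreducible_rep G n \<rho>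
      \<and> \<chi> = (\<lambda>g. if g \<in> carrier G then mat_trace (\<rho> g) else 0)}"

definition conj_class :: "('a, 'b) monoid_scheme \<Rightarrow> 'a \<Rightarrow> 'a set" where
  "conj_class G x = {inv\<^bsub>G\<^esub> g \<otimes>\<^bsub>G\<^esub> x \<otimes>\<^bsub>G\<^esub> g | g. g \<in> carrier G}"

definition D :: "('a, 'b) monoid_scheme \<Rightarrow> 'a set \<Rightarrow> real" where
  "D G H = (1 / real (card (carrier G))) *
     (\<Sum>\<chi> \<in> Irr G. Re (\<chi> \<one>\<^bsub>G\<^esub>) * cmod (\<Sum>h \<in> H - {\<one>\<^bsub>G\<^esub>}. \<chi> h))"

end

theory Submission
  imports Defs "Jordan_Normal_Form.Spectral_Radius" "HOL-Algebra.Multiplicative_Group" "HOL-Analysis.Convex"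
begin

text \<open>
  Both bounds come from column orthogonality: for \<open>x, y \<in> G\<close>, the sum of
  \<open>cnj (\<chi> x) * \<chi> y\<close> over \<open>\<chi> \<in> Irr G\<close> is \<open>|G| / |C\<^sub>x|\<close> if \<open>y \<in> C\<^sub>x\<close> and \<open>0\<close> otherwise.
  For the upper bound, estimate \<open>|\<Sum>\<^sub>h \<chi> h|\<close> by \<open>\<Sum>\<^sub>h |\<chi> h|\<close> and apply Cauchy-Schwarz
  to \<open>\<Sum>\<^sub>\<chi> d\<^sub>\<chi> |\<chi> h|\<close>, using \<open>\<Sum>\<^sub>\<chi> d\<^sub>\<chi>\<^sup>2 = |G|\<close> and
  \<open>\<Sum>\<^sub>\<chi> |\<chi> h|\<^sup>2 = |G| / |C\<^sub>h| \<le> |G| / |C\<^sub>x|\<close> (the class of \<open>x\<close> is the smallest). For the lower bound, \<open>|\<chi> x| \<le> d\<^sub>\<chi>\<close> gives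
  \<open>|G| D\<^sub>H \<ge> |\<Sum>\<^sub>\<chi> cnj (\<chi> x) \<Sum>\<^sub>h \<chi> h| = |G| |(H - {e}) \<inter> C\<^sub>x| / |C\<^sub>x| \<ge> |G| / |C\<^sub>x|\<close>,
  which is strictly larger than \<open>|G| / (|H| |C\<^sub>x|)\<close>.

  Schur's lemma gives the orthogonality of
  irreducible characters. Triangularizing along invariant subspaces writes every character as a
  sum of irreducible ones; applied to the regular representation this shows that a class function
  orthogonal to all irreducible characters vanishes, so the irreducible characters span the class
  functions. Expanding the indicator function of \<open>C\<^sub>x\<close> in them yields column orthogonality.
\<close>

section \<open>Traces\<close>

lemma mat_trace_carrier: "A \<in> carrier_mat n n \<Longrightarrow> mat_trace A = (\<Sum>i<n. A $$ (i,i))"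
  unfolding mat_trace_def by auto

lemma mat_trace_one [simp]: "mat_trace (1\<^sub>m n) = of_nat n"
  unfolding mat_trace_def by simp

lemma mat_trace_smult: "A \<in> carrier_mat n n \<Longrightarrow> mat_trace (c \<cdot>\<^sub>m A) = c * mat_trace A"
  unfolding mat_trace_def by (auto simp: sum_distrib_left intro!: sum.cong)

lemma mat_trace_comm:
  assumes A: "A \<in> carrier_mat n m" and B: "B \<in> carrier_mat m n"
  shows "mat_trace (A * B) = mat_trace (B * A)"
proof -
  have "mat_trace (A * B) = (\<Sum>i<n. \<Sum>j<m. A $$ (i,j) * B $$ (j,i))"
    unfolding mat_trace_def using A B
    by (auto simp: scalar_prod_def intro!: sum.cong sum.reindex_bij_witness[of _ id id])
  also have "\<dots> = (\<Sum>j<m. \<Sum>i<n. B $$ (j,i) * A $$ (i,j))"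
    by (subst sum.swap) (simp add: mult.commute)
  also have "\<dots> = mat_trace (B * A)"
    unfolding mat_trace_def using A B
    by (auto simp: scalar_prod_def intro!: sum.cong sum.reindex_bij_witness[of _ id id])
  finally show ?thesis .
qed

lemma mat_trace_similar:
  assumes A: "A \<in> carrier_mat n n" and P: "P \<in> carrier_mat n n" and Q: "Q \<in> carrier_mat n n"
    and QP: "Q * P = 1\<^sub>m n"
  shows "mat_trace (P * A * Q) = mat_trace A"
proof -
  have "mat_trace (P * A * Q) = mat_trace (Q * (P * A))"
    using A P Q by (intro mat_trace_comm[of _ n n]) auto
  also have "Q * (P * A) = (Q * P) * A" using A P Q by simp
  finally show ?thesis using QP A by simp
qed

lemma upper_triangular_mult:
  fixes X Y :: "'a :: comm_ring_1 mat"
  assumes X: "X \<in> carrier_mat n n" and Y: "Y \<in> carrier_mat n n"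
    and uX: "upper_triangular X" and uY: "upper_triangular Y"
  shows "upper_triangular (X * Y)" "\<And>i. i < n \<Longrightarrow> (X * Y) $$ (i,i) = X $$ (i,i) * Y $$ (i,i)"
proof -
  have entry: "(X * Y) $$ (i,j) = (\<Sum>l<n. X $$ (i,l) * Y $$ (l,j))" if "i < n" "j < n" for i j
    using X Y that by (auto simp: scalar_prod_def lessThan_atLeast0 intro!: sum.cong)
  have vanish: "X $$ (i,l) * Y $$ (l,j) = 0" if "i < n" "l < n" "\<not> (i \<le> l \<and> l \<le> j)" for i j l
    using that upper_triangularD[OF uX, of l i] upper_triangularD[OF uY, of j l] X Y
    by (cases "l < i") auto
  show "upper_triangular (X * Y)"
  proof (rule upper_triangularI)
    fix i j assume "j < i" "i < dim_row (X * Y)"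
    thus "(X * Y) $$ (i,j) = 0"
      using X by (subst entry) (auto intro!: sum.neutral vanish)
  qed
  fix i assume i: "i < n"
  have "(X * Y) $$ (i,i) = X $$ (i,i) * Y $$ (i,i) + (\<Sum>l\<in>{..<n} - {i}. X $$ (i,l) * Y $$ (l,i))"
    unfolding entry[OF i i] by (rule sum.remove) (use i in auto)
  also have "(\<Sum>l\<in>{..<n} - {i}. X $$ (i,l) * Y $$ (l,i)) = 0"
    using i by (intro sum.neutral) (auto intro!: vanish)
  finally show "(X * Y) $$ (i,i) = X $$ (i,i) * Y $$ (i,i)" by simp
qed

lemma upper_triangular_pow:
  fixes B :: "'a :: comm_ring_1 mat"
  assumes B: "B \<in> carrier_mat n n" and uB: "upper_triangular B"
  shows "upper_triangular (B ^\<^sub>m k) \<and> (\<forall>i<n. (B ^\<^sub>m k) $$ (i,i) = B $$ (i,i) ^ k)"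
proof (induction k)
  case 0 thus ?case using B by auto
next
  case (Suc k)
  have "B ^\<^sub>m k \<in> carrier_mat n n" using B by auto
  thus ?case using upper_triangular_mult[OF _ B] Suc uB by (auto simp: mult.commute)
qed

lemma mat_trace_pow_eq_sum_eigenvalues:
  fixes A :: "complex mat"
  assumes A: "A \<in> carrier_mat n n"
  obtains B P Q where "B \<in> carrier_mat n n" "upper_triangular B" "P \<in> carrier_mat n n" "Q \<in> carrier_mat n n"
    "Q * P = 1\<^sub>m n" "\<And>j. A ^\<^sub>m j = P * B ^\<^sub>m j * Q"
    "\<And>j. mat_trace (A ^\<^sub>m j) = (\<Sum>i<n. B $$ (i,i) ^ j)"
proof -
  obtain es where "char_poly A = (\<Prod>a\<leftarrow>es. [:- a, 1:])" using char_poly_factorized[OF A] by auto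
  then obtain B where B: "B \<in> carrier_mat n n" "upper_triangular B" "similar_mat A B"
    using schur_upper_triangular[OF A] by blast
  then obtain P Q where wit: "similar_mat_wit A B P Q" unfolding similar_mat_def by auto
  hence PQ: "P \<in> carrier_mat n n" "Q \<in> carrier_mat n n" "Q * P = 1\<^sub>m n"
    using A unfolding similar_mat_wit_def Let_def by auto
  have pow: "A ^\<^sub>m j = P * B ^\<^sub>m j * Q" for j using similar_mat_wit_pow_id[OF wit] .
  have "mat_trace (A ^\<^sub>m j) = (\<Sum>i<n. B $$ (i,i) ^ j)" for j
  proof -
    have "mat_trace (A ^\<^sub>m j) = mat_trace (B ^\<^sub>m j)"
      unfolding pow using B PQ by (intro mat_trace_similar) auto
    also have "\<dots> = (\<Sum>i<n. B $$ (i,i) ^ j)"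
      using upper_triangular_pow[OF B(1,2), of j] B(1) by (subst mat_trace_carrier[of _ n]) auto
    finally show ?thesis .
  qed
  with that B PQ pow show thesis by blast
qed

text \<open>After triangularization the diagonal entries are roots of unity; \<open>A ^ (k - 1)\<close> is the
  inverse of \<open>A\<close>.\<close>

lemma mat_trace_finite_order:
  fixes A :: "complex mat"
  assumes A: "A \<in> carrier_mat n n" and k: "k > 0" and Ak: "A ^\<^sub>m k = 1\<^sub>m n"
  shows "cmod (mat_trace A) \<le> real n" "mat_trace (A ^\<^sub>m (k - 1)) = cnj (mat_trace A)"
proof -
  obtain B P Q where B: "B \<in> carrier_mat n n" "upper_triangular B"
    and PQ: "P \<in> carrier_mat n n" "Q \<in> carrier_mat n n" "Q * P = 1\<^sub>m n" and pow: "\<And>j. A ^\<^sub>m j = P * B ^\<^sub>m j * Q"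
    and tr: "\<And>j. mat_trace (A ^\<^sub>m j) = (\<Sum>i<n. B $$ (i,i) ^ j)"
    using mat_trace_pow_eq_sum_eigenvalues[OF A] by blast
  have Bk: "B ^\<^sub>m k \<in> carrier_mat n n" using B by simp
  have "B ^\<^sub>m k = (Q * P) * B ^\<^sub>m k * (Q * P)"
    using PQ(3) by (simp add: left_mult_one_mat[OF Bk] right_mult_one_mat[OF Bk])
  also have "\<dots> = Q * (P * B ^\<^sub>m k * Q) * P"
    using Bk PQ(1,2) by (simp add: assoc_mult_mat[of _ n n _ n _ n])
  also have "\<dots> = 1\<^sub>m n" using Ak PQ by (simp flip: pow)
  finally have "B ^\<^sub>m k = 1\<^sub>m n" .
  hence unit: "B $$ (i,i) ^ k = 1" if "i < n" for i
    using upper_triangular_pow[OF B, of k] that by simp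
  have norm1: "cmod (B $$ (i,i)) = 1" if i: "i < n" for i
  proof -
    have "cmod (B $$ (i,i)) ^ k = 1 ^ k" using unit[OF i] by (metis norm_one norm_power power_one)
    thus ?thesis using power_eq_imp_eq_base[of "cmod (B $$ (i,i))" k 1] k by simp
  qed
  have "cmod (mat_trace A) \<le> (\<Sum>i<n. cmod (B $$ (i,i)))" using tr[of 1] by (simp add: sum_norm_le)
  thus "cmod (mat_trace A) \<le> real n" using norm1 by simp
  have "B $$ (i,i) ^ (k - 1) = cnj (B $$ (i,i))" if i: "i < n" for i
  proof -
    have "B $$ (i,i) * B $$ (i,i) ^ (k - 1) = 1" using unit[OF i] k by (metis Suc_diff_1 power_Suc)
    moreover have "B $$ (i,i) * cnj (B $$ (i,i)) = 1"
      using norm1[OF i] by (metis complex_norm_square of_real_1 power_one)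
    moreover have "B $$ (i,i) \<noteq> 0" using norm1[OF i] by auto
    ultimately show ?thesis by (metis mult_left_cancel)
  qed
  thus "mat_trace (A ^\<^sub>m (k - 1)) = cnj (mat_trace A)" using tr[of "k - 1"] tr[of 1] by simp
qed


section \<open>Linear algebra\<close>

lemma mat_eq_by_cols:
  fixes A B :: "'a :: semiring_1 mat"
  assumes A: "A \<in> carrier_mat n m" and B: "B \<in> carrier_mat n m"
    and cols: "\<And>j. j < m \<Longrightarrow> A *\<^sub>v unit_vec m j = B *\<^sub>v unit_vec m j"
  shows "A = B"
proof (rule eq_matI)
  fix i j assume i: "i < dim_row B" and j: "j < dim_col B"
  have "A $$ (i,j) = (A *\<^sub>v unit_vec m j) $ i" using A B i j by simp
  also have "\<dots> = B $$ (i,j)" using cols[of j] B i j by simp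
  finally show "A $$ (i,j) = B $$ (i,j)" .
qed (use A B in auto)

lemma mat_of_cols_mult_unit_vec:
  fixes ws :: "'a :: semiring_1 vec list"
  assumes "j < length ws" "set ws \<subseteq> carrier_vec n"
  shows "mat_of_cols n ws *\<^sub>v unit_vec (length ws) j = ws ! j"
proof -
  have wj: "ws ! j \<in> carrier_vec n" using assms by auto
  show ?thesis by (rule eq_vecI) (use assms wj in \<open>auto simp: mat_of_cols_index\<close>)
qed

lemma mat_of_cols_mult_vec_index:
  fixes ws :: "'a :: semiring_0 vec list"
  assumes "i < m" "c \<in> carrier_vec (length ws)"
  shows "(mat_of_cols m ws *\<^sub>v c) $ i = (\<Sum>j<length ws. ws ! j $ i * c $ j)"
  using assms by (auto simp: scalar_prod_def mat_of_cols_index lessThan_atLeast0 intro!: sum.cong)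

lemma mat_of_cols_snoc_mult_vec:
  fixes bs :: "'a :: comm_semiring_0 vec list"
  assumes c: "c \<in> carrier_vec (Suc (length bs))" and u: "u \<in> carrier_vec m"
  shows "mat_of_cols m (bs @ [u]) *\<^sub>v c =
     mat_of_cols m bs *\<^sub>v vec (length bs) (\<lambda>i. c $ i) + c $ (length bs) \<cdot>\<^sub>v u"
proof (rule eq_vecI)
  fix i assume "i < dim_vec (mat_of_cols m bs *\<^sub>v vec (length bs) (\<lambda>i. c $ i) + c $ (length bs) \<cdot>\<^sub>v u)"
  hence i: "i < m" using u by auto
  have "(mat_of_cols m (bs @ [u]) *\<^sub>v c) $ i = (\<Sum>j<Suc (length bs). (bs @ [u]) ! j $ i * c $ j)"
    using mat_of_cols_mult_vec_index[OF i, of c "bs @ [u]"] c by simp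
  also have "\<dots> = (\<Sum>j<length bs. bs ! j $ i * c $ j) + u $ i * c $ length bs"
    by (simp add: nth_append)
  also have "(\<Sum>j<length bs. bs ! j $ i * c $ j) = (mat_of_cols m bs *\<^sub>v vec (length bs) (\<lambda>i. c $ i)) $ i"
    by (subst mat_of_cols_mult_vec_index[OF i]) auto
  finally show "(mat_of_cols m (bs @ [u]) *\<^sub>v c) $ i
      = (mat_of_cols m bs *\<^sub>v vec (length bs) (\<lambda>i. c $ i) + c $ (length bs) \<cdot>\<^sub>v u) $ i"
    using i u by (simp add: mult.commute)
qed (use u in auto)

definition injective_mat :: "'a :: field mat \<Rightarrow> bool" where
  "injective_mat M \<longleftrightarrow>
     (\<forall>c \<in> carrier_vec (dim_col M). M *\<^sub>v c = 0\<^sub>v (dim_row M) \<longrightarrow> c = 0\<^sub>v (dim_col M))"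

definition in_col_span :: "nat \<Rightarrow> 'a :: field vec list \<Rightarrow> 'a vec \<Rightarrow> bool" where
  "in_col_span m bs v \<longleftrightarrow> (\<exists>c \<in> carrier_vec (length bs). v = mat_of_cols m bs *\<^sub>v c)"

text \<open>If \<open>k > m\<close>, padding \<open>M\<close> with zero rows gives a square matrix that is both
  nonsingular (by injectivity) and singular (its last row vanishes).\<close>

lemma injective_mat_dim_le:
  fixes M :: "'a :: field mat"
  assumes M: "M \<in> carrier_mat m k" and inj: "injective_mat M"
  shows "k \<le> m"
proof (rule ccontr)
  assume "\<not> k \<le> m"
  hence km: "m < k" by auto
  define M' where "M' = mat k k (\<lambda>(i,j). if i < m then M $$ (i,j) else 0)"
  have M': "M' \<in> carrier_mat k k" unfolding M'_def by auto
  have "det M' \<noteq> 0"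
  proof
    assume "det M' = 0"
    then obtain v where v: "v \<in> carrier_vec k" "v \<noteq> 0\<^sub>v k" "M' *\<^sub>v v = 0\<^sub>v k"
      using det_0_iff_vec_prod_zero[OF M'] by auto
    have "M *\<^sub>v v = 0\<^sub>v m"
    proof (rule eq_vecI)
      fix i assume "i < dim_vec (0\<^sub>v m :: 'a vec)"
      hence i: "i < m" by auto
      have "(M *\<^sub>v v) $ i = (M' *\<^sub>v v) $ i"
        using i km M v(1) unfolding M'_def by (auto simp: scalar_prod_def)
      thus "(M *\<^sub>v v) $ i = 0\<^sub>v m $ i" using v(3) i km by simp
    qed (use M in auto)
    hence "v = 0\<^sub>v k" using inj v(1) M unfolding injective_mat_def by auto
    with v(2) show False ..
  qed
  moreover have "det M' = 0"
  proof -
    have T: "transpose_mat M' \<in> carrier_mat k k" using M' by auto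
    have "transpose_mat M' *\<^sub>v unit_vec k (k - 1) = 0\<^sub>v k"
      using km M' unfolding M'_def by (intro eq_vecI) auto
    moreover have "unit_vec k (k - 1) \<noteq> (0\<^sub>v k :: 'a vec)"
      using km by (metis diff_less index_unit_vec(1) index_zero_vec(1) less_nat_zero_code
          not_gr_zero zero_neq_one One_nat_def)
    ultimately have "det (transpose_mat M') = 0"
      using det_0_iff_vec_prod_zero[OF T] by (meson unit_vec_carrier)
    thus ?thesis using det_transpose[OF M'] by simp
  qed
  ultimately show False by simp
qed

lemma not_in_col_span_coeff_zero:
  fixes bs :: "'a :: field vec list"
  assumes u: "u \<in> carrier_vec m" and nsp: "\<not> in_col_span m bs u"
    and c: "c \<in> carrier_vec (length bs)" and eq: "mat_of_cols m bs *\<^sub>v c + a \<cdot>\<^sub>v u = 0\<^sub>v m"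
  shows "a = 0"
proof (rule ccontr)
  assume a: "a \<noteq> 0"
  have "u = mat_of_cols m bs *\<^sub>v ((- 1 / a) \<cdot>\<^sub>v c)"
  proof (rule eq_vecI)
    fix i assume "i < dim_vec (mat_of_cols m bs *\<^sub>v ((- 1 / a) \<cdot>\<^sub>v c))"
    hence i: "i < m" by auto
    have "(mat_of_cols m bs *\<^sub>v c) $ i + a * u $ i = 0"
      using arg_cong[OF eq, of "\<lambda>v. v $ i"] i u by simp
    hence "u $ i = (- 1 / a) * (mat_of_cols m bs *\<^sub>v c) $ i"
      using a by (simp add: field_simps add_eq_0_iff2)
    moreover have "(mat_of_cols m bs *\<^sub>v ((- 1 / a) \<cdot>\<^sub>v c)) $ i = (- 1 / a) * (mat_of_cols m bs *\<^sub>v c) $ i"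
      using i c by (simp add: mat_of_cols_mult_vec_index sum_distrib_left ac_simps)
    ultimately show "u $ i = (mat_of_cols m bs *\<^sub>v ((- 1 / a) \<cdot>\<^sub>v c)) $ i"
      by simp
  qed (use u in auto)
  hence "in_col_span m bs u" unfolding in_col_span_def using c by (intro bexI[of _ "(- 1 / a) \<cdot>\<^sub>v c"]) auto
  with nsp show False ..
qed

lemma injective_mat_snoc:
  fixes bs :: "'a :: field vec list"
  assumes u: "u \<in> carrier_vec m"
    and inj: "injective_mat (mat_of_cols m bs)" and nsp: "\<not> in_col_span m bs u"
  shows "injective_mat (mat_of_cols m (bs @ [u]))"
  unfolding injective_mat_def
proof (intro ballI impI)
  let ?L = "length bs"
  fix c :: "'a vec"
  assume c: "c \<in> carrier_vec (dim_col (mat_of_cols m (bs @ [u])))"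
    and z: "mat_of_cols m (bs @ [u]) *\<^sub>v c = 0\<^sub>v (dim_row (mat_of_cols m (bs @ [u])))"
  define c0 where "c0 = vec ?L (\<lambda>i. c $ i)"
  have c0: "c0 \<in> carrier_vec ?L" unfolding c0_def by simp
  have eq: "mat_of_cols m bs *\<^sub>v c0 + c $ ?L \<cdot>\<^sub>v u = 0\<^sub>v m"
    using z mat_of_cols_snoc_mult_vec[OF _ u, of c] c unfolding c0_def by simp
  have last0: "c $ ?L = 0" using not_in_col_span_coeff_zero[OF u nsp c0 eq] .
  have "0 \<cdot>\<^sub>v u = 0\<^sub>v m" using u by (intro eq_vecI) auto
  moreover have "mat_of_cols m bs *\<^sub>v c0 \<in> carrier_vec m" by (rule mult_mat_vec_carrier[OF _ c0]) simp
  ultimately have "mat_of_cols m bs *\<^sub>v c0 = 0\<^sub>v m" using eq last0 by simp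
  hence "c0 = 0\<^sub>v ?L" using inj c0 unfolding injective_mat_def by auto
  hence "c $ i = 0" if "i < ?L" for i
    using that unfolding c0_def by (metis index_vec index_zero_vec(1))
  thus "c = 0\<^sub>v (dim_col (mat_of_cols m (bs @ [u])))"
    using last0 c by (intro eq_vecI) (auto simp: less_Suc_eq)
qed

lemma extend_injective_cols_to_span:
  fixes bs :: "'a :: field vec list"
  assumes U: "U \<subseteq> carrier_vec m" and bs: "set bs \<subseteq> U" and inj: "injective_mat (mat_of_cols m bs)"
  shows "\<exists>cs. set cs \<subseteq> U \<and> injective_mat (mat_of_cols m (bs @ cs)) \<and> (\<forall>u \<in> U. in_col_span m (bs @ cs) u)"
  using bs inj
proof (induction "m - length bs" arbitrary: bs rule: less_induct)
  case less
  show ?case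
  proof (cases "\<forall>u \<in> U. in_col_span m bs u")
    case True thus ?thesis using less.prems by (intro exI[of _ "[]"]) auto
  next
    case False
    then obtain u where u: "u \<in> U" "\<not> in_col_span m bs u" by auto
    have inj': "injective_mat (mat_of_cols m (bs @ [u]))"
      using injective_mat_snoc less.prems u U by blast
    have "length (bs @ [u]) \<le> m" by (rule injective_mat_dim_le[OF _ inj']) auto
    hence "m - length (bs @ [u]) < m - length bs" by auto
    from less.hyps[OF this _ inj'] u less.prems
    obtain cs where "set cs \<subseteq> U" "injective_mat (mat_of_cols m ((bs @ [u]) @ cs))"
      "\<forall>v \<in> U. in_col_span m ((bs @ [u]) @ cs) v"
      by auto
    thus ?thesis using u(1) by (intro exI[of _ "u # cs"]) auto
  qed
qed

lemma in_col_span_subspace: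
  assumes U: "is_subspace m U" and bs: "set bs \<subseteq> U" and sp: "in_col_span m bs v"
  shows "v \<in> U"
  using bs sp
proof (induction bs arbitrary: v rule: rev_induct)
  case Nil
  then obtain c where "c \<in> carrier_vec 0" "v = mat_of_cols m [] *\<^sub>v c" unfolding in_col_span_def by auto
  hence "v = 0\<^sub>v m" by (intro eq_vecI) (auto simp: scalar_prod_def)
  thus ?case using U unfolding is_subspace_def by auto
next
  case (snoc u bs)
  from snoc.prems obtain c where c: "c \<in> carrier_vec (Suc (length bs))" "v = mat_of_cols m (bs @ [u]) *\<^sub>v c"
    unfolding in_col_span_def by auto
  have uU: "u \<in> U" using snoc.prems by auto
  hence "u \<in> carrier_vec m" using U unfolding is_subspace_def by auto
  hence v: "v = mat_of_cols m bs *\<^sub>v vec (length bs) (\<lambda>i. c $ i) + c $ (length bs) \<cdot>\<^sub>v u"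
    using mat_of_cols_snoc_mult_vec[OF c(1)] c(2) by simp
  have "mat_of_cols m bs *\<^sub>v vec (length bs) (\<lambda>i. c $ i) \<in> U"
    by (rule snoc.IH) (use snoc.prems in \<open>auto simp: in_col_span_def\<close>)
  moreover have "c $ (length bs) \<cdot>\<^sub>v u \<in> U" using U uU unfolding is_subspace_def by auto
  ultimately show ?case using U v unfolding is_subspace_def by auto
qed


lemma mat_right_inverse_of_surjective:
  fixes T :: "'a :: semiring_1 mat"
  assumes T: "T \<in> carrier_mat n m"
    and surj: "\<And>v. v \<in> carrier_vec n \<Longrightarrow> \<exists>w \<in> carrier_vec m. T *\<^sub>v w = v"
  obtains R where "R \<in> carrier_mat m n" "T * R = 1\<^sub>m n"
proof -
  have "\<forall>i<n. \<exists>w. w \<in> carrier_vec m \<and> T *\<^sub>v w = unit_vec n i"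
    using surj[OF unit_vec_carrier] by blast
  then obtain wf where wf: "\<And>i. i < n \<Longrightarrow> wf i \<in> carrier_vec m \<and> T *\<^sub>v wf i = unit_vec n i"
    by metis
  define R where "R = mat_of_cols m (map wf [0..<n])"
  have R: "R \<in> carrier_mat m n" unfolding R_def by auto
  have "T * R = 1\<^sub>m n"
  proof (rule mat_eq_by_cols[of _ n n])
    fix j assume j: "j < n"
    have "set (map wf [0..<n]) \<subseteq> carrier_vec m" using wf by auto
    hence "R *\<^sub>v unit_vec n j = wf j"
      using mat_of_cols_mult_unit_vec[of j "map wf [0..<n]" m] j unfolding R_def by auto
    thus "(T * R) *\<^sub>v unit_vec n j = 1\<^sub>m n *\<^sub>v unit_vec n j" using T R wf[OF j] by simp
  qed (use T R in auto)
  with R that show ?thesis by blast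
qed

lemma mat_left_inverse_of_right_inverse:
  fixes T :: "'a :: field mat"
  assumes T: "T \<in> carrier_mat n m" and R: "R \<in> carrier_mat m n" and TR: "T * R = 1\<^sub>m n"
    and inj: "injective_mat T"
  shows "R * T = 1\<^sub>m m"
proof (rule mat_eq_by_cols[of _ m m])
  fix j assume j: "j < m"
  define u where "u = R *\<^sub>v (T *\<^sub>v unit_vec m j)"
  have u: "u \<in> carrier_vec m" unfolding u_def using R T by auto
  have "T *\<^sub>v u = (T * R) *\<^sub>v (T *\<^sub>v unit_vec m j)"
    unfolding u_def using T R by simp
  also have "\<dots> = T *\<^sub>v unit_vec m j" using TR T by simp
  finally have "T *\<^sub>v (u - unit_vec m j) = 0\<^sub>v n" using T u by (simp add: mult_minus_distrib_mat_vec)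
  hence "u - unit_vec m j = 0\<^sub>v m" using inj T u unfolding injective_mat_def by auto
  hence "(u - unit_vec m j) $ i = 0" if "i < m" for i using that by simp
  hence "u $ i = unit_vec m j $ i" if "i < m" for i using that u by force
  hence "u = unit_vec m j" using u by (intro eq_vecI) auto
  thus "(R * T) *\<^sub>v unit_vec m j = 1\<^sub>m m *\<^sub>v unit_vec m j" unfolding u_def using R T by simp
qed (use T R in auto)


section \<open>Representations and Schur's lemma\<close>

definition invariant_subspace ::
    "('a, 'b) monoid_scheme \<Rightarrow> nat \<Rightarrow> ('a \<Rightarrow> complex mat) \<Rightarrow> complex vec set \<Rightarrow> bool" where
  "invariant_subspace G n \<rho> W \<longleftrightarrow> is_subspace n W \<and> (\<forall>g \<in> carrier G. \<forall>w \<in> W. \<rho> g *\<^sub>v w \<in> W)"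

lemma irreducible_rep_iff:
  "irreducible_rep G n \<rho> \<longleftrightarrow>
     is_rep G n \<rho> \<and> (\<forall>W. invariant_subspace G n \<rho> W \<longrightarrow> W = {0\<^sub>v n} \<or> W = carrier_vec n)"
  unfolding irreducible_rep_def invariant_subspace_def by blast

lemma irreducible_rep_is_rep: "irreducible_rep G n \<rho> \<Longrightarrow> is_rep G n \<rho>"
  unfolding irreducible_rep_def by blast

context group
begin

lemma rep_carrier: "is_rep G n \<rho> \<Longrightarrow> g \<in> carrier G \<Longrightarrow> \<rho> g \<in> carrier_mat n n"
  unfolding is_rep_def by auto

lemma rep_mult: "is_rep G n \<rho> \<Longrightarrow> g \<in> carrier G \<Longrightarrow> h \<in> carrier G \<Longrightarrow> \<rho> (g \<otimes> h) = \<rho> g * \<rho> h"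
  unfolding is_rep_def by auto

lemma rep_one: "is_rep G n \<rho> \<Longrightarrow> \<rho> \<one> = 1\<^sub>m n"
  unfolding is_rep_def by auto

lemma rep_inv_mult: "is_rep G n \<rho> \<Longrightarrow> g \<in> carrier G \<Longrightarrow> \<rho> (inv g) * \<rho> g = 1\<^sub>m n"
  by (metis rep_mult rep_one inv_closed l_inv)

lemma rep_mult_inv: "is_rep G n \<rho> \<Longrightarrow> g \<in> carrier G \<Longrightarrow> \<rho> g * \<rho> (inv g) = 1\<^sub>m n"
  by (metis rep_mult rep_one inv_closed r_inv)

lemma rep_pow:
  assumes r: "is_rep G n \<rho>" and g: "g \<in> carrier G"
  shows "\<rho> (g [^] (k::nat)) = \<rho> g ^\<^sub>m k"
  using rep_carrier[OF r g] by (induction k) (simp_all add: rep_one[OF r] rep_mult[OF r] g)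

lemma rep_trace_conj:
  assumes r: "is_rep G n \<rho>" and g: "g \<in> carrier G" and h: "h \<in> carrier G"
  shows "mat_trace (\<rho> (inv h \<otimes> g \<otimes> h)) = mat_trace (\<rho> g)"
proof -
  have "\<rho> (inv h \<otimes> g \<otimes> h) = \<rho> (inv h) * \<rho> g * \<rho> h" using r g h by (simp add: rep_mult)
  thus ?thesis
    using mat_trace_similar[OF rep_carrier[OF r g] rep_carrier[OF r inv_closed[OF h]]
        rep_carrier[OF r h] rep_mult_inv[OF r h]] by simp
qed

lemma rep_trace_norm_le:
  assumes fin: "finite (carrier G)" and r: "is_rep G n \<rho>" and g: "g \<in> carrier G"
  shows "cmod (mat_trace (\<rho> g)) \<le> real n"
  using mat_trace_finite_order(1)[OF rep_carrier[OF r g], of "ord g"] ord_ge_1[OF fin g]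
    rep_pow[OF r g, of "ord g"] rep_one[OF r] g by simp

lemma rep_trace_inv:
  assumes fin: "finite (carrier G)" and r: "is_rep G n \<rho>" and g: "g \<in> carrier G"
  shows "mat_trace (\<rho> (inv g)) = cnj (mat_trace (\<rho> g))"
proof -
  have k: "ord g > 0" using ord_ge_1[OF fin g] by simp
  have "g [^] (ord g - 1) \<otimes> g = \<one>"
    using g k by (metis Suc_diff_1 nat_pow_Suc pow_ord_eq_1)
  hence "inv g = g [^] (ord g - 1)" using g by (intro inv_equality) auto
  moreover have "\<rho> g ^\<^sub>m ord g = 1\<^sub>m n" using rep_pow[OF r g, of "ord g"] rep_one[OF r] g by simp
  ultimately show ?thesis
    using mat_trace_finite_order(2)[OF rep_carrier[OF r g] k] rep_pow[OF r g] by simp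
qed

lemma intertwiner_kernel_invariant:
  assumes r: "is_rep G n \<rho>" and s: "is_rep G m \<sigma>" and T: "T \<in> carrier_mat n m"
    and comm: "\<And>g. g \<in> carrier G \<Longrightarrow> \<rho> g * T = T * \<sigma> g"
  shows "invariant_subspace G m \<sigma> {w \<in> carrier_vec m. T *\<^sub>v w = 0\<^sub>v n}"
  unfolding invariant_subspace_def is_subspace_def
proof (intro conjI ballI allI)
  fix g w assume g: "g \<in> carrier G" and w: "w \<in> {w \<in> carrier_vec m. T *\<^sub>v w = 0\<^sub>v n}"
  have "T *\<^sub>v (\<sigma> g *\<^sub>v w) = (T * \<sigma> g) *\<^sub>v w"
    using T w rep_carrier[OF s g] by simp
  also have "\<dots> = \<rho> g *\<^sub>v (T *\<^sub>v w)"
    using T w rep_carrier[OF r g] by (simp flip: comm[OF g])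
  finally show "\<sigma> g *\<^sub>v w \<in> {w \<in> carrier_vec m. T *\<^sub>v w = 0\<^sub>v n}"
    using w rep_carrier[OF r g] rep_carrier[OF s g] by auto
next
  fix v w assume "v \<in> {w \<in> carrier_vec m. T *\<^sub>v w = 0\<^sub>v n}" "w \<in> {w \<in> carrier_vec m. T *\<^sub>v w = 0\<^sub>v n}"
  thus "v + w \<in> {w \<in> carrier_vec m. T *\<^sub>v w = 0\<^sub>v n}" using T by (simp add: mult_add_distrib_mat_vec)
next
  fix c :: complex and w assume "w \<in> {w \<in> carrier_vec m. T *\<^sub>v w = 0\<^sub>v n}"
  thus "c \<cdot>\<^sub>v w \<in> {w \<in> carrier_vec m. T *\<^sub>v w = 0\<^sub>v n}" using T by (auto simp: mult_mat_vec)
qed (use T in auto)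

lemma intertwiner_image_invariant:
  assumes r: "is_rep G n \<rho>" and s: "is_rep G m \<sigma>" and T: "T \<in> carrier_mat n m"
    and comm: "\<And>g. g \<in> carrier G \<Longrightarrow> \<rho> g * T = T * \<sigma> g"
  shows "invariant_subspace G n \<rho> {T *\<^sub>v w | w. w \<in> carrier_vec m}"
  unfolding invariant_subspace_def is_subspace_def
proof (intro conjI ballI allI)
  fix g v assume g: "g \<in> carrier G" and "v \<in> {T *\<^sub>v w | w. w \<in> carrier_vec m}"
  then obtain w where w: "w \<in> carrier_vec m" "v = T *\<^sub>v w" by auto
  have "\<rho> g *\<^sub>v v = (\<rho> g * T) *\<^sub>v w"
    using T w rep_carrier[OF r g] by simp
  also have "\<dots> = T *\<^sub>v (\<sigma> g *\<^sub>v w)"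
    using T w rep_carrier[OF s g] by (simp add: comm[OF g])
  finally have "\<rho> g *\<^sub>v v = T *\<^sub>v (\<sigma> g *\<^sub>v w)" .
  thus "\<rho> g *\<^sub>v v \<in> {T *\<^sub>v w | w. w \<in> carrier_vec m}" using w rep_carrier[OF s g] by auto
next
  show "0\<^sub>v n \<in> {T *\<^sub>v w | w. w \<in> carrier_vec m}"
    using T by (intro CollectI exI[of _ "0\<^sub>v m"]) auto
next
  fix v v' assume "v \<in> {T *\<^sub>v w | w. w \<in> carrier_vec m}" "v' \<in> {T *\<^sub>v w | w. w \<in> carrier_vec m}"
  then obtain w w' where "v = T *\<^sub>v w" "v' = T *\<^sub>v w'" "w \<in> carrier_vec m" "w' \<in> carrier_vec m" by auto
  thus "v + v' \<in> {T *\<^sub>v w | w. w \<in> carrier_vec m}"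
    using T by (intro CollectI exI[of _ "w + w'"]) (auto simp: mult_add_distrib_mat_vec)
next
  fix c :: complex and v assume "v \<in> {T *\<^sub>v w | w. w \<in> carrier_vec m}"
  then obtain w where "v = T *\<^sub>v w" "w \<in> carrier_vec m" by auto
  thus "c \<cdot>\<^sub>v v \<in> {T *\<^sub>v w | w. w \<in> carrier_vec m}"
    using T by (intro CollectI exI[of _ "c \<cdot>\<^sub>v w"]) (auto simp: mult_mat_vec)
next
  show "{T *\<^sub>v w | w. w \<in> carrier_vec m} \<subseteq> carrier_vec n" using T mult_mat_vec_carrier by blast
qed

lemma irreducible_intertwiner_injective:
  assumes r: "is_rep G n \<rho>" and s: "irreducible_rep G m \<sigma>" and T: "T \<in> carrier_mat n m"
    and comm: "\<And>g. g \<in> carrier G \<Longrightarrow> \<rho> g * T = T * \<sigma> g" and nz: "T \<noteq> 0\<^sub>m n m"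
  shows "injective_mat T"
proof -
  let ?K = "{w \<in> carrier_vec m. T *\<^sub>v w = 0\<^sub>v n}"
  have "?K = {0\<^sub>v m} \<or> ?K = carrier_vec m"
    using s intertwiner_kernel_invariant[OF r irreducible_rep_is_rep[OF s] T comm]
    unfolding irreducible_rep_iff by blast
  moreover have "?K \<noteq> carrier_vec m"
  proof
    assume "?K = carrier_vec m"
    have "unit_vec m j \<in> ?K" for j unfolding \<open>?K = carrier_vec m\<close> by simp
    hence "T *\<^sub>v unit_vec m j = 0\<^sub>v n" for j by simp
    hence "T = 0\<^sub>m n m" using T by (intro mat_eq_by_cols[of _ n m]) auto
    with nz show False ..
  qed
  ultimately have K0: "?K = {0\<^sub>v m}" by blast
  show ?thesis unfolding injective_mat_def
  proof (intro ballI impI)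
    fix c assume "c \<in> carrier_vec (dim_col T)" "T *\<^sub>v c = 0\<^sub>v (dim_row T)"
    hence "c \<in> ?K" using T by simp
    thus "c = 0\<^sub>v (dim_col T)" using T unfolding K0 by simp
  qed
qed

lemma irreducible_intertwiner_surjective:
  assumes r: "irreducible_rep G n \<rho>" and s: "is_rep G m \<sigma>" and T: "T \<in> carrier_mat n m"
    and comm: "\<And>g. g \<in> carrier G \<Longrightarrow> \<rho> g * T = T * \<sigma> g" and nz: "T \<noteq> 0\<^sub>m n m"
    and v: "v \<in> carrier_vec n"
  shows "\<exists>w \<in> carrier_vec m. T *\<^sub>v w = v"
proof -
  let ?I = "{T *\<^sub>v w | w. w \<in> carrier_vec m}"
  have "?I = {0\<^sub>v n} \<or> ?I = carrier_vec n"
    using r intertwiner_image_invariant[OF irreducible_rep_is_rep[OF r] s T comm]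
    unfolding irreducible_rep_iff by blast
  moreover have "?I \<noteq> {0\<^sub>v n}"
  proof
    assume "?I = {0\<^sub>v n}"
    have "T *\<^sub>v unit_vec m j \<in> ?I" for j by (intro CollectI exI[of _ "unit_vec m j"]) auto
    hence "T *\<^sub>v unit_vec m j = 0\<^sub>v n" for j unfolding \<open>?I = {0\<^sub>v n}\<close> by simp
    hence "T = 0\<^sub>m n m" using T by (intro mat_eq_by_cols[of _ n m]) auto
    with nz show False ..
  qed
  ultimately have "?I = carrier_vec n" by blast
  with v have "v \<in> ?I" by simp
  thus ?thesis by blast
qed

lemma schur_lemma_scalar:
  assumes r: "irreducible_rep G n \<rho>" and T: "T \<in> carrier_mat n n"
    and comm: "\<And>g. g \<in> carrier G \<Longrightarrow> \<rho> g * T = T * \<rho> g"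
  shows "\<exists>c. T = c \<cdot>\<^sub>m 1\<^sub>m n"
proof -
  have isr: "is_rep G n \<rho>" using irreducible_rep_is_rep[OF r] .
  obtain lam where "lam \<in> spectrum T" using spectrum_non_empty[OF T] isr unfolding is_rep_def by auto
  then obtain v where v: "v \<in> carrier_vec n" "v \<noteq> 0\<^sub>v n" "T *\<^sub>v v = lam \<cdot>\<^sub>v v"
    using T unfolding spectrum_def eigenvalue_def eigenvector_def by auto
  define T' where "T' = T - lam \<cdot>\<^sub>m 1\<^sub>m n"
  have T': "T' \<in> carrier_mat n n" unfolding T'_def by (simp add: minus_carrier_mat)
  have comm': "\<rho> g * T' = T' * \<rho> g" if g: "g \<in> carrier G" for g
  proof -
    have rg: "\<rho> g \<in> carrier_mat n n" using rep_carrier[OF isr g] .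
    have "\<rho> g * (lam \<cdot>\<^sub>m 1\<^sub>m n) = (lam \<cdot>\<^sub>m 1\<^sub>m n) * \<rho> g"
      using rg by (simp add: mult_smult_distrib[OF rg one_carrier_mat] mult_smult_assoc_mat[OF one_carrier_mat rg])
    thus ?thesis
      using comm[OF g] T rg unfolding T'_def by (simp add: mult_minus_distrib_mat minus_mult_distrib_mat)
  qed
  have "(lam \<cdot>\<^sub>m 1\<^sub>m n) *\<^sub>v v = lam \<cdot>\<^sub>v v"
  proof (rule eq_vecI)
    fix i assume "i < dim_vec (lam \<cdot>\<^sub>v v)"
    hence i: "i < n" using v by simp
    have "((lam \<cdot>\<^sub>m 1\<^sub>m n) *\<^sub>v v) $ i = (\<Sum>k=0..<n. lam * (if k = i then 1 else 0) * v $ k)"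
      using v i by (simp add: scalar_prod_def)
    also have "\<dots> = (\<Sum>k=0..<n. if k = i then lam * v $ k else 0)" by (rule sum.cong) auto
    finally show "((lam \<cdot>\<^sub>m 1\<^sub>m n) *\<^sub>v v) $ i = (lam \<cdot>\<^sub>v v) $ i" using i v by simp
  qed (use v in simp)
  hence "T' *\<^sub>v v = 0\<^sub>v n" unfolding T'_def using T v by (simp add: minus_mult_distrib_mat_vec)
  hence "T' = 0\<^sub>m n n"
    using irreducible_intertwiner_injective[OF isr r T' comm'] v T' unfolding injective_mat_def by auto
  have "T $$ (i,j) = (lam \<cdot>\<^sub>m 1\<^sub>m n) $$ (i,j)" if "i < n" "j < n" for i j
  proof -
    have "(T - lam \<cdot>\<^sub>m 1\<^sub>m n) $$ (i,j) = 0" using \<open>T' = 0\<^sub>m n n\<close> that unfolding T'_def by simp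
    thus ?thesis using T that by simp
  qed
  hence "T = lam \<cdot>\<^sub>m 1\<^sub>m n" using T by (intro eq_matI) auto
  thus ?thesis ..
qed

lemma schur_lemma_inequivalent:
  assumes r: "irreducible_rep G n \<rho>" and s: "irreducible_rep G m \<sigma>" and T: "T \<in> carrier_mat n m"
    and comm: "\<And>g. g \<in> carrier G \<Longrightarrow> \<rho> g * T = T * \<sigma> g"
    and differ: "\<exists>g \<in> carrier G. mat_trace (\<rho> g) \<noteq> mat_trace (\<sigma> g)"
  shows "T = 0\<^sub>m n m"
proof (rule ccontr)
  assume nz: "T \<noteq> 0\<^sub>m n m"
  note isr = irreducible_rep_is_rep[OF r] and iss = irreducible_rep_is_rep[OF s]
  obtain R where R: "R \<in> carrier_mat m n" and TR: "T * R = 1\<^sub>m n"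
    using mat_right_inverse_of_surjective[OF T irreducible_intertwiner_surjective[OF r iss T comm nz]] .
  have RT: "R * T = 1\<^sub>m m"
    using mat_left_inverse_of_right_inverse[OF T R TR irreducible_intertwiner_injective[OF isr s T comm nz]] .
  have "mat_trace (\<rho> g) = mat_trace (\<sigma> g)" if g: "g \<in> carrier G" for g
  proof -
    have rg: "\<rho> g \<in> carrier_mat n n" and sg: "\<sigma> g \<in> carrier_mat m m"
      using rep_carrier[OF isr g] rep_carrier[OF iss g] .
    have "\<rho> g = \<rho> g * (T * R)" using TR rg by simp
    also have "\<dots> = (\<rho> g * T) * R" using rg T R by (simp add:)
    also have "\<dots> = T * (\<sigma> g * R)" using T sg R by (simp add: comm[OF g])
    finally have "\<rho> g = T * (\<sigma> g * R)" .
    hence "mat_trace (\<rho> g) = mat_trace ((\<sigma> g * R) * T)"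
      using T sg R by (simp add: mat_trace_comm[of T n m])
    also have "\<dots> = mat_trace (\<sigma> g)" using RT sg R T by simp
    finally show ?thesis .
  qed
  with differ show False by blast
qed

end


section \<open>Orthogonality of irreducible characters\<close>

text \<open>Matrices of varying dimensions do not form a monoid, so finite sums of matrices are
  taken entrywise with explicit dimensions.\<close>

definition mat_sum :: "nat \<Rightarrow> nat \<Rightarrow> ('b \<Rightarrow> 'a :: comm_monoid_add mat) \<Rightarrow> 'b set \<Rightarrow> 'a mat" where
  "mat_sum n m F S = mat n m (\<lambda>(i,j). \<Sum>g\<in>S. F g $$ (i,j))"

lemma mat_sum_carrier [simp]: "mat_sum n m F S \<in> carrier_mat n m"
  unfolding mat_sum_def by auto

lemma mat_sum_dim [simp]: "dim_row (mat_sum n m F S) = n" "dim_col (mat_sum n m F S) = m"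
  unfolding mat_sum_def by auto

lemma mat_sum_index [simp]: "i < n \<Longrightarrow> j < m \<Longrightarrow> mat_sum n m F S $$ (i,j) = (\<Sum>g\<in>S. F g $$ (i,j))"
  unfolding mat_sum_def by auto

lemma mat_sum_cong: "(\<And>g. g \<in> S \<Longrightarrow> F g = F' g) \<Longrightarrow> mat_sum n m F S = mat_sum n m F' S"
  unfolding mat_sum_def by (auto intro!: sum.cong)

lemma mat_sum_reindex:
  assumes "bij_betw h S S'"
  shows "mat_sum n m F S' = mat_sum n m (\<lambda>g. F (h g)) S"
proof -
  have "(\<Sum>g\<in>S'. F g $$ (i,j)) = (\<Sum>g\<in>S. F (h g) $$ (i,j))" for i j
    using sum.reindex_bij_betw[OF assms, of "\<lambda>g. F g $$ (i,j)"] by simp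
  thus ?thesis unfolding mat_sum_def by auto
qed

lemma mat_sum_mult_left:
  fixes A :: "'a :: comm_semiring_0 mat"
  assumes A: "A \<in> carrier_mat k n" and F: "\<And>g. g \<in> S \<Longrightarrow> F g \<in> carrier_mat n m"
  shows "A * mat_sum n m F S = mat_sum k m (\<lambda>g. A * F g) S"
proof (rule eq_matI)
  fix i j assume "i < dim_row (mat_sum k m (\<lambda>g. A * F g) S)" "j < dim_col (mat_sum k m (\<lambda>g. A * F g) S)"
  hence i: "i < k" and j: "j < m" by auto
  have "(A * mat_sum n m F S) $$ (i,j) = (\<Sum>l<n. A $$ (i,l) * (\<Sum>g\<in>S. F g $$ (l,j)))"
    using A i j by (auto simp: scalar_prod_def lessThan_atLeast0 intro!: sum.cong)
  also have "\<dots> = (\<Sum>g\<in>S. \<Sum>l<n. A $$ (i,l) * F g $$ (l,j))"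
    by (simp add: sum_distrib_left sum.swap[of _ S])
  also have "\<dots> = (\<Sum>g\<in>S. (A * F g) $$ (i,j))"
  proof (rule sum.cong[OF refl])
    fix g assume "g \<in> S"
    hence "F g \<in> carrier_mat n m" using F by blast
    thus "(\<Sum>l<n. A $$ (i,l) * F g $$ (l,j)) = (A * F g) $$ (i,j)"
      using A i j by (auto simp: scalar_prod_def lessThan_atLeast0 intro!: sum.cong)
  qed
  finally show "(A * mat_sum n m F S) $$ (i,j) = mat_sum k m (\<lambda>g. A * F g) S $$ (i,j)"
    using i j by simp
qed (use A in auto)

lemma mat_sum_mult_right:
  fixes A :: "'a :: comm_semiring_0 mat"
  assumes A: "A \<in> carrier_mat m k" and F: "\<And>g. g \<in> S \<Longrightarrow> F g \<in> carrier_mat n m"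
  shows "mat_sum n m F S * A = mat_sum n k (\<lambda>g. F g * A) S"
proof (rule eq_matI)
  fix i j assume "i < dim_row (mat_sum n k (\<lambda>g. F g * A) S)" "j < dim_col (mat_sum n k (\<lambda>g. F g * A) S)"
  hence i: "i < n" and j: "j < k" by auto
  have "(mat_sum n m F S * A) $$ (i,j) = (\<Sum>l<m. (\<Sum>g\<in>S. F g $$ (i,l)) * A $$ (l,j))"
    using A i j by (auto simp: scalar_prod_def lessThan_atLeast0 intro!: sum.cong)
  also have "\<dots> = (\<Sum>g\<in>S. \<Sum>l<m. F g $$ (i,l) * A $$ (l,j))"
    by (simp add: sum_distrib_right sum.swap[of _ S])
  also have "\<dots> = (\<Sum>g\<in>S. (F g * A) $$ (i,j))"
  proof (rule sum.cong[OF refl])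
    fix g assume "g \<in> S"
    hence "F g \<in> carrier_mat n m" using F by blast
    thus "(\<Sum>l<m. F g $$ (i,l) * A $$ (l,j)) = (F g * A) $$ (i,j)"
      using A i j by (auto simp: scalar_prod_def lessThan_atLeast0 intro!: sum.cong)
  qed
  finally show "(mat_sum n m F S * A) $$ (i,j) = mat_sum n k (\<lambda>g. F g * A) S $$ (i,j)"
    using i j by simp
qed (use A in auto)

lemma mat_trace_mat_sum:
  assumes "\<And>g. g \<in> S \<Longrightarrow> F g \<in> carrier_mat n n"
  shows "mat_trace (mat_sum n n F S) = (\<Sum>g\<in>S. mat_trace (F g))"
  using assms by (simp add: mat_trace_carrier[of _ n] sum.swap[of _ S])

definition single_entry_mat :: "nat \<Rightarrow> nat \<Rightarrow> nat \<Rightarrow> nat \<Rightarrow> 'a :: zero_neq_one mat" where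
  "single_entry_mat n m a b = mat n m (\<lambda>(i,j). if i = a \<and> j = b then 1 else 0)"

lemma single_entry_mat_carrier [simp]: "single_entry_mat n m a b \<in> carrier_mat n m"
  unfolding single_entry_mat_def by auto

lemma mat_trace_single_entry_mat:
  "a < n \<Longrightarrow> b < n \<Longrightarrow> mat_trace (single_entry_mat n n a b) = (if a = b then 1 else 0)"
  unfolding mat_trace_def single_entry_mat_def by auto

lemma single_entry_mat_sandwich:
  fixes A B :: "'a :: comm_semiring_1 mat"
  assumes A: "A \<in> carrier_mat n n" and B: "B \<in> carrier_mat m m" and a: "a < n" and b: "b < m"
  shows "(A * single_entry_mat n m a b * B) $$ (a,b) = A $$ (a,a) * B $$ (b,b)"
proof -
  have AE: "(A * single_entry_mat n m a b) $$ (a,l) = (if l = b then A $$ (a,a) else 0)" if l: "l < m" for l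
  proof -
    have "(A * single_entry_mat n m a b) $$ (a,l) = (\<Sum>k<n. A $$ (a,k) * (if k = a \<and> l = b then 1 else 0))"
      using A a l by (auto simp: single_entry_mat_def scalar_prod_def lessThan_atLeast0 intro!: sum.cong)
    also have "\<dots> = (\<Sum>k<n. if k = a then (if l = b then A $$ (a,a) else 0) else 0)"
      by (intro sum.cong) auto
    finally show ?thesis using a by simp
  qed
  have "(A * single_entry_mat n m a b * B) $$ (a,b) = (\<Sum>l<m. (A * single_entry_mat n m a b) $$ (a,l) * B $$ (l,b))"
    using A B a b by (auto simp: single_entry_mat_def scalar_prod_def lessThan_atLeast0 intro!: sum.cong)
  also have "\<dots> = (\<Sum>l<m. if l = b then A $$ (a,a) * B $$ (b,b) else 0)"
    using AE by (intro sum.cong) auto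
  finally show ?thesis using b by simp
qed

definition rep_average ::
    "('a, 'b) monoid_scheme \<Rightarrow> nat \<Rightarrow> nat \<Rightarrow> ('a \<Rightarrow> complex mat) \<Rightarrow> ('a \<Rightarrow> complex mat) \<Rightarrow> complex mat \<Rightarrow> complex mat" where
  "rep_average G n m \<rho> \<sigma> X = mat_sum n m (\<lambda>g. \<rho> g * X * \<sigma> (inv\<^bsub>G\<^esub> g)) (carrier G)"

context group
begin

lemma bij_betw_mult_left: "h \<in> carrier G \<Longrightarrow> bij_betw (\<lambda>g. h \<otimes> g) (carrier G) (carrier G)"
  by (rule bij_betw_byWitness[of _ "\<lambda>g. inv h \<otimes> g"]) (auto simp: m_assoc[symmetric])

lemma bij_betw_conj:
  assumes h: "h \<in> carrier G"
  shows "bij_betw (\<lambda>g. inv h \<otimes> g \<otimes> h) (carrier G) (carrier G)"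
proof (rule bij_betw_byWitness[of _ "\<lambda>g. h \<otimes> g \<otimes> inv h"])
  show "\<forall>g\<in>carrier G. h \<otimes> (inv h \<otimes> g \<otimes> h) \<otimes> inv h = g"
    using h by (simp add: m_assoc[symmetric], simp add: m_assoc)
  show "\<forall>g\<in>carrier G. inv h \<otimes> (h \<otimes> g \<otimes> inv h) \<otimes> h = g"
    using h by (simp add: m_assoc[symmetric], simp add: m_assoc)
qed (use h in auto)

lemma rep_average_intertwines:
  assumes r: "is_rep G n \<rho>" and s: "is_rep G m \<sigma>" and X: "X \<in> carrier_mat n m" and h: "h \<in> carrier G"
  shows "\<rho> h * rep_average G n m \<rho> \<sigma> X = rep_average G n m \<rho> \<sigma> X * \<sigma> h"
proof -
  note rc = rep_carrier[OF r] and sc = rep_carrier[OF s]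
  have F: "\<rho> g * X * \<sigma> (inv g) \<in> carrier_mat n m" if "g \<in> carrier G" for g
    using rc sc X that by (meson inv_closed mult_carrier_mat)
  have "\<rho> h * rep_average G n m \<rho> \<sigma> X = mat_sum n m (\<lambda>g. \<rho> h * (\<rho> g * X * \<sigma> (inv g))) (carrier G)"
    unfolding rep_average_def using rc[OF h] F by (rule mat_sum_mult_left)
  also have "\<dots> = mat_sum n m (\<lambda>g. \<rho> (h \<otimes> g) * X * \<sigma> (inv g)) (carrier G)"
  proof (rule mat_sum_cong)
    fix g assume g: "g \<in> carrier G"
    show "\<rho> h * (\<rho> g * X * \<sigma> (inv g)) = \<rho> (h \<otimes> g) * X * \<sigma> (inv g)"
    proof -
      have "\<rho> h \<in> carrier_mat n n" "\<rho> g \<in> carrier_mat n n" "\<sigma> (inv g) \<in> carrier_mat m m"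
        using rc[OF h] rc[OF g] sc[OF inv_closed[OF g]] .
      thus ?thesis using X g h
        by (simp add: rep_mult[OF r] assoc_mult_mat[of _ n n _ n _ m] assoc_mult_mat[of _ n n _ m _ m]
            assoc_mult_mat[of _ n m _ m _ m])
    qed
  qed
  also have "\<dots> = mat_sum n m (\<lambda>g. \<rho> g * X * \<sigma> (inv g) * \<sigma> h) (carrier G)"
  proof -
    have inv_shift: "\<sigma> (inv (h \<otimes> g)) * \<sigma> h = \<sigma> (inv g)" if g: "g \<in> carrier G" for g
      using g h sc[OF inv_closed[OF g]] sc[OF inv_closed[OF h]] sc[OF h] rep_inv_mult[OF s h]
      by (simp add: inv_mult_group rep_mult[OF s])
    have "\<rho> (h \<otimes> g) * X * \<sigma> (inv (h \<otimes> g)) * \<sigma> h = \<rho> (h \<otimes> g) * X * \<sigma> (inv g)"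
      if g: "g \<in> carrier G" for g
    proof -
      have "\<rho> (h \<otimes> g) * X * \<sigma> (inv (h \<otimes> g)) * \<sigma> h = \<rho> (h \<otimes> g) * X * (\<sigma> (inv (h \<otimes> g)) * \<sigma> h)"
        using g h rc[of "h \<otimes> g"] sc[of "inv (h \<otimes> g)"] sc[OF h] X
        by (intro assoc_mult_mat[of _ n m _ m _ m]) auto
      thus ?thesis using inv_shift[OF g] by simp
    qed
    thus ?thesis
      by (simp add: mat_sum_reindex[OF bij_betw_mult_left[OF h], of n m "\<lambda>g. \<rho> g * X * \<sigma> (inv g) * \<sigma> h"]
          cong: mat_sum_cong)
  qed
  also have "\<dots> = rep_average G n m \<rho> \<sigma> X * \<sigma> h"
    unfolding rep_average_def using sc[OF h] F by (rule mat_sum_mult_right[symmetric])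
  finally show ?thesis .
qed

lemma rep_average_single_entry:
  assumes r: "is_rep G n \<rho>" and s: "is_rep G m \<sigma>" and a: "a < n" and b: "b < m"
  shows "rep_average G n m \<rho> \<sigma> (single_entry_mat n m a b) $$ (a,b)
    = (\<Sum>g\<in>carrier G. \<rho> g $$ (a,a) * \<sigma> (inv g) $$ (b,b))"
  unfolding rep_average_def using a b
  by (auto intro!: sum.cong single_entry_mat_sandwich rep_carrier[OF r] rep_carrier[OF s])

lemma rep_average_trace:
  assumes r: "is_rep G n \<rho>" and X: "X \<in> carrier_mat n n"
  shows "mat_trace (rep_average G n n \<rho> \<rho> X) = of_nat (card (carrier G)) * mat_trace X"
proof -
  have "mat_trace (\<rho> g * X * \<rho> (inv g)) = mat_trace X" if g: "g \<in> carrier G" for g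
    using X rep_carrier[OF r g] rep_carrier[OF r inv_closed[OF g]] rep_inv_mult[OF r g]
    by (rule mat_trace_similar)
  moreover have "\<rho> g * X * \<rho> (inv g) \<in> carrier_mat n n" if g: "g \<in> carrier G" for g
    using X rep_carrier[OF r g] rep_carrier[OF r inv_closed[OF g]] by auto
  ultimately show ?thesis unfolding rep_average_def by (simp add: mat_trace_mat_sum)
qed

lemma rep_entries_orth_inequivalent:
  assumes r: "irreducible_rep G n \<rho>" and s: "irreducible_rep G m \<sigma>"
    and differ: "\<exists>g \<in> carrier G. mat_trace (\<rho> g) \<noteq> mat_trace (\<sigma> g)"
    and a: "a < n" and b: "b < m"
  shows "(\<Sum>g\<in>carrier G. \<rho> g $$ (a,a) * \<sigma> (inv g) $$ (b,b)) = 0"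
proof -
  note isr = irreducible_rep_is_rep[OF r] and iss = irreducible_rep_is_rep[OF s]
  have "rep_average G n m \<rho> \<sigma> (single_entry_mat n m a b) = 0\<^sub>m n m"
    using schur_lemma_inequivalent[OF r s _ _ differ]
      rep_average_intertwines[OF isr iss single_entry_mat_carrier]
    unfolding rep_average_def by simp
  thus ?thesis using rep_average_single_entry[OF isr iss a b] a b by simp
qed

lemma rep_entries_orth_irreducible:
  assumes r: "irreducible_rep G n \<rho>" and a: "a < n" and b: "b < n"
  shows "(\<Sum>g\<in>carrier G. \<rho> g $$ (a,a) * \<rho> (inv g) $$ (b,b))
     = (if a = b then of_nat (card (carrier G)) / of_nat n else 0)"
proof -
  note isr = irreducible_rep_is_rep[OF r]
  define T where "T = rep_average G n n \<rho> \<rho> (single_entry_mat n n a b)"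
  obtain c where c: "T = c \<cdot>\<^sub>m 1\<^sub>m n"
    using schur_lemma_scalar[OF r _ rep_average_intertwines[OF isr isr single_entry_mat_carrier]]
    unfolding T_def rep_average_def by auto
  have "c * of_nat n = of_nat (card (carrier G)) * (if a = b then 1 else 0)"
    using rep_average_trace[OF isr single_entry_mat_carrier, of a b] mat_trace_single_entry_mat[OF a b]
    unfolding T_def[symmetric] c by (simp add: mat_trace_smult[of _ n])
  moreover have "n > 0" using a by simp
  ultimately have "c = (if a = b then of_nat (card (carrier G)) / of_nat n else 0)"
    by (auto simp: field_simps)
  moreover have "T $$ (a,b) = (if a = b then c else 0)" unfolding c using a b by auto
  ultimately show ?thesis using rep_average_single_entry[OF isr isr a b] unfolding T_def by simp
qed

end

definition character :: "('a, 'b) monoid_scheme \<Rightarrow> ('a \<Rightarrow> complex mat) \<Rightarrow> 'a \<Rightarrow> complex" where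
  "character G \<rho> = (\<lambda>g. if g \<in> carrier G then mat_trace (\<rho> g) else 0)"

lemma Irr_iff: "\<chi> \<in> Irr G \<longleftrightarrow> (\<exists>n \<rho>. irreducible_rep G n \<rho> \<and> \<chi> = character G \<rho>)"
  unfolding Irr_def character_def by blast

lemma character_in_Irr: "irreducible_rep G n \<rho> \<Longrightarrow> character G \<rho> \<in> Irr G"
  unfolding Irr_iff by blast

context group
begin

lemma character_inner_product:
  assumes fin: "finite (carrier G)" and r: "is_rep G n \<rho>" and s: "is_rep G m \<sigma>"
  shows "(\<Sum>g\<in>carrier G. character G \<rho> g * cnj (character G \<sigma> g))
    = (\<Sum>a<n. \<Sum>b<m. \<Sum>g\<in>carrier G. \<rho> g $$ (a,a) * \<sigma> (inv g) $$ (b,b))"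
proof -
  have "(\<Sum>g\<in>carrier G. character G \<rho> g * cnj (character G \<sigma> g))
      = (\<Sum>g\<in>carrier G. \<Sum>a<n. \<Sum>b<m. \<rho> g $$ (a,a) * \<sigma> (inv g) $$ (b,b))"
  proof (rule sum.cong[OF refl])
    fix g assume g: "g \<in> carrier G"
    have "character G \<rho> g * cnj (character G \<sigma> g) = mat_trace (\<rho> g) * mat_trace (\<sigma> (inv g))"
      using g unfolding character_def by (simp add: rep_trace_inv[OF fin s g])
    also have "\<dots> = (\<Sum>a<n. \<Sum>b<m. \<rho> g $$ (a,a) * \<sigma> (inv g) $$ (b,b))"
      using rep_carrier[OF r g] rep_carrier[OF s inv_closed[OF g]]
      by (simp add: mat_trace_carrier[of _ n] mat_trace_carrier[of _ m] sum_product)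
    finally show "character G \<rho> g * cnj (character G \<sigma> g)
        = (\<Sum>a<n. \<Sum>b<m. \<rho> g $$ (a,a) * \<sigma> (inv g) $$ (b,b))" .
  qed
  also have "\<dots> = (\<Sum>a<n. \<Sum>b<m. \<Sum>g\<in>carrier G. \<rho> g $$ (a,a) * \<sigma> (inv g) $$ (b,b))"
    by (simp add: sum.swap[of _ "carrier G"])
  finally show ?thesis .
qed

lemma Irr_orth:
  assumes fin: "finite (carrier G)" and chi: "\<chi> \<in> Irr G" and psi: "\<psi> \<in> Irr G"
  shows "(\<Sum>g\<in>carrier G. \<chi> g * cnj (\<psi> g)) = (if \<chi> = \<psi> then of_nat (card (carrier G)) else 0)"
proof -
  obtain n \<rho> where r: "irreducible_rep G n \<rho>" and c: "\<chi> = character G \<rho>"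
    using chi unfolding Irr_iff by auto
  obtain m \<sigma> where s: "irreducible_rep G m \<sigma>" and p: "\<psi> = character G \<sigma>"
    using psi unfolding Irr_iff by auto
  note isr = irreducible_rep_is_rep[OF r] and iss = irreducible_rep_is_rep[OF s]
  show ?thesis
  proof (cases "\<chi> = \<psi>")
    case True
    have "(\<Sum>g\<in>carrier G. \<chi> g * cnj (\<psi> g))
        = (\<Sum>a<n. \<Sum>b<n. \<Sum>g\<in>carrier G. \<rho> g $$ (a,a) * \<rho> (inv g) $$ (b,b))"
      unfolding True[symmetric] c by (rule character_inner_product[OF fin isr isr])
    also have "\<dots> = (\<Sum>a<n. of_nat (card (carrier G)) / of_nat n)"
      using rep_entries_orth_irreducible[OF r] by simp
    also have "\<dots> = of_nat (card (carrier G))"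
      using isr unfolding is_rep_def by simp
    finally show ?thesis using True by simp
  next
    case False
    hence "\<exists>g \<in> carrier G. mat_trace (\<rho> g) \<noteq> mat_trace (\<sigma> g)"
      unfolding c p character_def by auto
    thus ?thesis
      using False character_inner_product[OF fin isr iss] rep_entries_orth_inequivalent[OF r s]
      unfolding c p by simp
  qed
qed

end


section \<open>Characters of reducible representations\<close>

lemma spanning_injective_cols_invertible:
  fixes bs :: "'a :: field vec list"
  assumes inj: "injective_mat (mat_of_cols n bs)" and span: "\<And>u. u \<in> carrier_vec n \<Longrightarrow> in_col_span n bs u"
  shows "length bs = n" "\<exists>X \<in> carrier_mat n n. mat_of_cols n bs * X = 1\<^sub>m n \<and> X * mat_of_cols n bs = 1\<^sub>m n"
proof -
  define P where "P = mat_of_cols n bs"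
  have P: "P \<in> carrier_mat n (length bs)" unfolding P_def by auto
  obtain X where X: "X \<in> carrier_mat (length bs) n" and PX: "P * X = 1\<^sub>m n"
    using mat_right_inverse_of_surjective[OF P] span unfolding in_col_span_def P_def by metis
  have "injective_mat X" unfolding injective_mat_def
  proof (intro ballI impI)
    fix c assume c: "c \<in> carrier_vec (dim_col X)" and z: "X *\<^sub>v c = 0\<^sub>v (dim_row X)"
    have "c = (P * X) *\<^sub>v c" using PX c X by simp
    also have "\<dots> = P *\<^sub>v 0\<^sub>v (length bs)" using z X P c by simp
    also have "\<dots> = 0\<^sub>v n" using P by (intro eq_vecI) auto
    finally show "c = 0\<^sub>v (dim_col X)" using X by simp
  qed
  hence "length bs = n"
    using injective_mat_dim_le[OF X] injective_mat_dim_le[OF P] inj unfolding P_def by simp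
  thus "length bs = n" .
  moreover have "X * P = 1\<^sub>m n"
    using mat_mult_left_right_inverse[OF _ _ PX] P X \<open>length bs = n\<close> by simp
  ultimately show "\<exists>X \<in> carrier_mat n n. mat_of_cols n bs * X = 1\<^sub>m n \<and> X * mat_of_cols n bs = 1\<^sub>m n"
    using X PX unfolding P_def by auto
qed

lemma mat_of_cols_prefix_span_coords:
  fixes bs cs :: "'a :: field vec list"
  assumes len: "length (bs @ cs) = n" and X: "X \<in> carrier_mat n n"
    and XP: "X * mat_of_cols n (bs @ cs) = 1\<^sub>m n"
    and w: "in_col_span n bs w" and i: "length bs \<le> i" "i < n"
  shows "(X *\<^sub>v w) $ i = 0"
proof -
  let ?k = "length bs" and ?P = "mat_of_cols n (bs @ cs)"
  obtain c where c: "c \<in> carrier_vec ?k" "w = mat_of_cols n bs *\<^sub>v c"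
    using w unfolding in_col_span_def by auto
  define c' where "c' = vec n (\<lambda>i. if i < ?k then c $ i else 0)"
  have c': "c' \<in> carrier_vec n" unfolding c'_def by auto
  have P: "?P \<in> carrier_mat n n" using len by auto
  have "w = ?P *\<^sub>v c'"
  proof (rule eq_vecI)
    fix j assume "j < dim_vec (?P *\<^sub>v c')"
    hence j: "j < n" using P by auto
    have "(?P *\<^sub>v c') $ j = (\<Sum>l<n. (bs @ cs) ! l $ j * c' $ l)"
      using j c' len by (subst mat_of_cols_mult_vec_index) auto
    also have "\<dots> = (\<Sum>l<?k. bs ! l $ j * c $ l)"
      using len unfolding c'_def
      by (auto simp: nth_append lessThan_atLeast0 intro!: sum.mono_neutral_cong_right)
    also have "\<dots> = w $ j"
      using mat_of_cols_mult_vec_index[OF j c(1)] unfolding c(2) by simp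
    finally show "w $ j = (?P *\<^sub>v c') $ j" ..
  qed (use P c in auto)
  hence "X *\<^sub>v w = c'" using X P XP c' by (simp flip: assoc_mult_mat_vec)
  thus ?thesis using i unfolding c'_def by simp
qed

text \<open>The columns of \<open>P\<close> are a basis of \<open>W\<close> extended to a basis of the whole space, and
  \<open>X\<close> is the inverse of \<open>P\<close>.\<close>

lemma subspace_adapted_basis:
  assumes W: "is_subspace n W" and nz: "W \<noteq> {0\<^sub>v n}" and nf: "W \<noteq> carrier_vec n"
  obtains k P X where "0 < k" "k < n" "P \<in> carrier_mat n n" "X \<in> carrier_mat n n"
    "P * X = 1\<^sub>m n" "X * P = 1\<^sub>m n" "\<And>l. l < k \<Longrightarrow> P *\<^sub>v unit_vec n l \<in> W"
    "\<And>w i. w \<in> W \<Longrightarrow> k \<le> i \<Longrightarrow> i < n \<Longrightarrow> (X *\<^sub>v w) $ i = 0"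
proof -
  have Wc: "W \<subseteq> carrier_vec n" using W unfolding is_subspace_def by auto
  have inj0: "injective_mat (mat_of_cols n ([] :: complex vec list))"
    unfolding injective_mat_def by auto
  obtain bs where bs: "set bs \<subseteq> W" "injective_mat (mat_of_cols n bs)" "\<forall>u \<in> W. in_col_span n bs u"
    using extend_injective_cols_to_span[OF Wc _ inj0] by auto
  obtain cs where cs: "set cs \<subseteq> carrier_vec n" "injective_mat (mat_of_cols n (bs @ cs))"
      "\<forall>u \<in> carrier_vec n. in_col_span n (bs @ cs) u"
    using extend_injective_cols_to_span[of "carrier_vec n" n bs] bs Wc by auto
  define P where "P = mat_of_cols n (bs @ cs)"
  have len: "length (bs @ cs) = n" using spanning_injective_cols_invertible(1)[OF cs(2)] cs(3) by blast
  obtain X where X: "X \<in> carrier_mat n n" "P * X = 1\<^sub>m n" "X * P = 1\<^sub>m n"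
    using spanning_injective_cols_invertible(2)[OF cs(2)] cs(3) unfolding P_def by blast
  have P: "P \<in> carrier_mat n n" unfolding P_def using len by auto
  have k0: "0 < length bs"
  proof (rule ccontr)
    assume "\<not> 0 < length bs"
    hence "bs = []" by auto
    obtain w where w: "w \<in> W" "w \<noteq> 0\<^sub>v n" using nz W unfolding is_subspace_def by auto
    then obtain c where "c \<in> carrier_vec 0" "w = mat_of_cols n [] *\<^sub>v c"
      using bs(3) \<open>bs = []\<close> unfolding in_col_span_def by auto
    hence "w = 0\<^sub>v n" by (intro eq_vecI) (auto simp: scalar_prod_def)
    with w show False by simp
  qed
  have k_lt: "length bs < n"
  proof (rule ccontr)
    assume "\<not> length bs < n"
    hence "cs = []" using len by auto
    hence "carrier_vec n \<subseteq> W" using cs(3) in_col_span_subspace[OF W bs(1)] by auto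
    with Wc nf show False by auto
  qed
  have cols_W: "P *\<^sub>v unit_vec n l \<in> W" if l: "l < length bs" for l
    using mat_of_cols_mult_unit_vec[of l "bs @ cs" n] bs(1) Wc cs(1) l len
    unfolding P_def by (auto simp: nth_append)
  have coords: "(X *\<^sub>v w) $ i = 0" if "w \<in> W" "length bs \<le> i" "i < n" for w i
    using mat_of_cols_prefix_span_coords[OF len X(1) X(3)[unfolded P_def]] bs(3) that by blast
  show thesis using that[OF k0 k_lt P X(1) X(2) X(3) cols_W coords] .
qed

lemma sum_lessThan_split_shift:
  fixes f :: "nat \<Rightarrow> 'a :: comm_monoid_add"
  assumes "k \<le> n"
  shows "(\<Sum>l<n. f l) = (\<Sum>l<k. f l) + (\<Sum>l<n-k. f (l+k))"
proof -
  have "{..<n} = {..<k} \<union> {k..<n}" using assms by auto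
  hence "(\<Sum>l<n. f l) = (\<Sum>l<k. f l) + (\<Sum>l\<in>{k..<n}. f l)"
    by (simp add: sum.union_disjoint ivl_disj_int)
  also have "(\<Sum>l\<in>{k..<n}. f l) = (\<Sum>l<n-k. f (l+k))"
    by (rule sum.reindex_bij_witness[of _ "\<lambda>l. l + k" "\<lambda>l. l - k"]) (use assms in auto)
  finally show ?thesis .
qed

definition upper_left_block :: "nat \<Rightarrow> 'a mat \<Rightarrow> 'a mat" where
  "upper_left_block k S = mat k k (\<lambda>(i,j). S $$ (i,j))"

definition lower_right_block :: "nat \<Rightarrow> nat \<Rightarrow> 'a mat \<Rightarrow> 'a mat" where
  "lower_right_block n k S = mat (n-k) (n-k) (\<lambda>(i,j). S $$ (i+k,j+k))"

definition lower_left_zero :: "nat \<Rightarrow> nat \<Rightarrow> 'a :: zero mat \<Rightarrow> bool" where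
  "lower_left_zero n k S \<longleftrightarrow> (\<forall>i l. k \<le> i \<longrightarrow> i < n \<longrightarrow> l < k \<longrightarrow> S $$ (i,l) = 0)"

lemma block_triangular_mult:
  fixes S1 S2 :: "'a :: semiring_0 mat"
  assumes S1: "S1 \<in> carrier_mat n n" and S2: "S2 \<in> carrier_mat n n"
    and z1: "lower_left_zero n k S1" and z2: "lower_left_zero n k S2" and k: "k \<le> n"
  shows "upper_left_block k (S1 * S2) = upper_left_block k S1 * upper_left_block k S2"
    "lower_right_block n k (S1 * S2) = lower_right_block n k S1 * lower_right_block n k S2"
    "lower_left_zero n k (S1 * S2)"
proof -
  have prod: "(S1 * S2) $$ (i,j) = (\<Sum>l<k. S1 $$ (i,l) * S2 $$ (l,j)) + (\<Sum>l<n-k. S1 $$ (i,l+k) * S2 $$ (l+k,j))"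
    if "i < n" "j < n" for i j
    using S1 S2 that sum_lessThan_split_shift[OF k]
    by (auto simp: scalar_prod_def lessThan_atLeast0 intro!: sum.cong)
  have lower_zero: "(\<Sum>l<n-k. S1 $$ (i,l+k) * S2 $$ (l+k,j)) = 0" if "j < k" for i j
    using z2 that unfolding lower_left_zero_def by (intro sum.neutral) auto
  have upper_zero: "(\<Sum>l<k. S1 $$ (i,l) * S2 $$ (l,j)) = 0" if "k \<le> i" "i < n" for i j
    using z1 that unfolding lower_left_zero_def by (intro sum.neutral) auto
  show "upper_left_block k (S1 * S2) = upper_left_block k S1 * upper_left_block k S2"
    using k by (intro eq_matI)
      (auto simp: upper_left_block_def prod lower_zero[unfolded lessThan_atLeast0] scalar_prod_def lessThan_atLeast0 intro!: sum.cong)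
  show "lower_right_block n k (S1 * S2) = lower_right_block n k S1 * lower_right_block n k S2"
    using k by (intro eq_matI)
      (auto simp: lower_right_block_def prod upper_zero[unfolded lessThan_atLeast0] scalar_prod_def lessThan_atLeast0 intro!: sum.cong)
  show "lower_left_zero n k (S1 * S2)"
    using k unfolding lower_left_zero_def by (auto simp: prod upper_zero lower_zero)
qed

lemma mat_trace_blocks:
  assumes S: "S \<in> carrier_mat n n" and k: "k \<le> n"
  shows "mat_trace S = mat_trace (upper_left_block k S) + mat_trace (lower_right_block n k S)"
  using sum_lessThan_split_shift[OF k, of "\<lambda>i. S $$ (i,i)"] S
  unfolding mat_trace_def upper_left_block_def lower_right_block_def by simp

lemma blocks_one:
  "k \<le> n \<Longrightarrow> upper_left_block k (1\<^sub>m n) = 1\<^sub>m k \<and> lower_right_block n k (1\<^sub>m n) = 1\<^sub>m (n-k)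
    \<and> lower_left_zero n k (1\<^sub>m n)"
  unfolding upper_left_block_def lower_right_block_def lower_left_zero_def by auto


context group
begin

lemma rep_conjugate:
  assumes r: "is_rep G n \<sigma>" and P: "P \<in> carrier_mat n n" and X: "X \<in> carrier_mat n n"
    and PX: "P * X = 1\<^sub>m n" and XP: "X * P = 1\<^sub>m n"
  shows "is_rep G n (\<lambda>g. X * \<sigma> g * P)"
    "\<And>g. g \<in> carrier G \<Longrightarrow> mat_trace (X * \<sigma> g * P) = mat_trace (\<sigma> g)"
proof -
  have "X * \<sigma> (g \<otimes> h) * P = (X * \<sigma> g * P) * (X * \<sigma> h * P)"
    if g: "g \<in> carrier G" and h: "h \<in> carrier G" for g h
  proof -
    have sg: "\<sigma> g \<in> carrier_mat n n" and sh: "\<sigma> h \<in> carrier_mat n n"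
      using rep_carrier[OF r g] rep_carrier[OF r h] .
    have "(X * \<sigma> g * P) * (X * \<sigma> h * P) = X * \<sigma> g * (P * X) * \<sigma> h * P"
      using X P sg sh by (simp add: assoc_mult_mat[of _ n n _ n _ n])
    thus ?thesis using PX X P sg sh g h by (simp add: rep_mult[OF r])
  qed
  thus "is_rep G n (\<lambda>g. X * \<sigma> g * P)"
    using r X P XP rep_carrier[OF r] unfolding is_rep_def by auto
  show "mat_trace (X * \<sigma> g * P) = mat_trace (\<sigma> g)" if "g \<in> carrier G" for g
    using mat_trace_similar[OF rep_carrier[OF r that] X P PX] .
qed

lemma block_triangular_rep_split:
  assumes r: "is_rep G n S" and z: "\<forall>g \<in> carrier G. lower_left_zero n k (S g)"
    and k0: "0 < k" and kn: "k < n"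
  shows "is_rep G k (\<lambda>g. upper_left_block k (S g))" "is_rep G (n-k) (\<lambda>g. lower_right_block n k (S g))"
    "\<And>g. g \<in> carrier G \<Longrightarrow>
      mat_trace (S g) = mat_trace (upper_left_block k (S g)) + mat_trace (lower_right_block n k (S g))"
proof -
  have mult: "upper_left_block k (S (g \<otimes> h)) = upper_left_block k (S g) * upper_left_block k (S h)"
    "lower_right_block n k (S (g \<otimes> h)) = lower_right_block n k (S g) * lower_right_block n k (S h)"
    if "g \<in> carrier G" "h \<in> carrier G" for g h
    using block_triangular_mult[OF rep_carrier[OF r] rep_carrier[OF r]] z kn that
    by (simp_all add: rep_mult[OF r])
  show "is_rep G k (\<lambda>g. upper_left_block k (S g))"
    unfolding is_rep_def
  proof (intro conjI ballI)
    show "upper_left_block k (S \<one>) = 1\<^sub>m k" using kn by (simp add: rep_one[OF r] blocks_one)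
  qed (use k0 mult in \<open>simp_all add: upper_left_block_def\<close>)
  show "is_rep G (n-k) (\<lambda>g. lower_right_block n k (S g))"
    unfolding is_rep_def
  proof (intro conjI ballI)
    show "lower_right_block n k (S \<one>) = 1\<^sub>m (n-k)" using kn by (simp add: rep_one[OF r] blocks_one)
  qed (use kn mult in \<open>simp_all add: lower_right_block_def\<close>)
  show "mat_trace (S g) = mat_trace (upper_left_block k (S g)) + mat_trace (lower_right_block n k (S g))"
    if "g \<in> carrier G" for g
    using mat_trace_blocks[OF rep_carrier[OF r that]] kn by simp
qed

lemma reducible_rep_char_split:
  assumes r: "is_rep G n \<sigma>" and W: "invariant_subspace G n \<sigma> W"
    and nz: "W \<noteq> {0\<^sub>v n}" and nf: "W \<noteq> carrier_vec n"
  obtains k A C where "0 < k" "k < n" "is_rep G k A" "is_rep G (n-k) C"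
    "\<And>g. g \<in> carrier G \<Longrightarrow> mat_trace (\<sigma> g) = mat_trace (A g) + mat_trace (C g)"
proof -
  have Wsub: "is_subspace n W" using W unfolding invariant_subspace_def by blast
  obtain k P X where k: "0 < k" "k < n" and P: "P \<in> carrier_mat n n" and X: "X \<in> carrier_mat n n"
    and PX: "P * X = 1\<^sub>m n" and XP: "X * P = 1\<^sub>m n"
    and cols: "\<And>l. l < k \<Longrightarrow> P *\<^sub>v unit_vec n l \<in> W"
    and coords: "\<And>w i. w \<in> W \<Longrightarrow> k \<le> i \<Longrightarrow> i < n \<Longrightarrow> (X *\<^sub>v w) $ i = 0"
    using subspace_adapted_basis[OF Wsub nz nf] by blast
  define S where "S = (\<lambda>g. X * \<sigma> g * P)"
  note S = rep_conjugate[OF r P X PX XP, folded S_def]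
  have llz: "\<forall>g \<in> carrier G. lower_left_zero n k (S g)"
    unfolding lower_left_zero_def
  proof (intro ballI allI impI)
    fix g i l assume g: "g \<in> carrier G" and i: "k \<le> i" "i < n" and l: "l < k"
    have "\<sigma> g *\<^sub>v (P *\<^sub>v unit_vec n l) \<in> W" using W cols[OF l] g unfolding invariant_subspace_def by blast
    moreover have "S g $$ (i,l) = (X *\<^sub>v (\<sigma> g *\<^sub>v (P *\<^sub>v unit_vec n l))) $ i"
    proof -
      have sg: "\<sigma> g \<in> carrier_mat n n" using rep_carrier[OF r g] .
      have "S g *\<^sub>v unit_vec n l = (X * \<sigma> g) *\<^sub>v (P *\<^sub>v unit_vec n l)"
        unfolding S_def using sg X P by (intro assoc_mult_mat_vec[of _ n n _ n]) auto
      also have "\<dots> = X *\<^sub>v (\<sigma> g *\<^sub>v (P *\<^sub>v unit_vec n l))"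
        using sg X P by (intro assoc_mult_mat_vec[of _ n n _ n]) auto
      finally have col: "S g *\<^sub>v unit_vec n l = X *\<^sub>v (\<sigma> g *\<^sub>v (P *\<^sub>v unit_vec n l))" .
      have "S g \<in> carrier_mat n n" unfolding S_def using sg X P by auto
      hence entry: "S g $$ (i,l) = (S g *\<^sub>v unit_vec n l) $ i" using i l k by simp
      show ?thesis by (simp only: entry col)
    qed
    ultimately show "S g $$ (i,l) = 0" using coords i by simp
  qed
  note split = block_triangular_rep_split[OF S(1) llz k]
  show thesis
  proof (rule that[OF k split(1,2)])
    fix g assume g: "g \<in> carrier G"
    show "mat_trace (\<sigma> g) = mat_trace (upper_left_block k (S g)) + mat_trace (lower_right_block n k (S g))"
      using split(3)[OF g] S(2)[OF g] unfolding S_def by simp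
  qed
qed

lemma rep_char_decomp:
  assumes "is_rep G n \<sigma>"
  shows "\<exists>cs. set cs \<subseteq> Irr G \<and> (\<forall>g \<in> carrier G. mat_trace (\<sigma> g) = (\<Sum>c\<leftarrow>cs. c g))"
  using assms
proof (induction n arbitrary: \<sigma> rule: less_induct)
  case (less n)
  show ?case
  proof (cases "irreducible_rep G n \<sigma>")
    case True
    thus ?thesis
      using character_in_Irr[OF True] by (intro exI[of _ "[character G \<sigma>]"]) (auto simp: character_def)
  next
    case False
    then obtain W where W: "invariant_subspace G n \<sigma> W" "W \<noteq> {0\<^sub>v n}" "W \<noteq> carrier_vec n"
      using less.prems unfolding irreducible_rep_iff by blast
    obtain k A C where k: "0 < k" "k < n" and A: "is_rep G k A" and C: "is_rep G (n-k) C"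
      and tr: "\<And>g. g \<in> carrier G \<Longrightarrow> mat_trace (\<sigma> g) = mat_trace (A g) + mat_trace (C g)"
      using reducible_rep_char_split[OF less.prems W] by metis
    obtain c1 where c1: "set c1 \<subseteq> Irr G" "\<forall>g \<in> carrier G. mat_trace (A g) = (\<Sum>c\<leftarrow>c1. c g)"
      using less.IH[OF k(2) A] by blast
    obtain c2 where c2: "set c2 \<subseteq> Irr G" "\<forall>g \<in> carrier G. mat_trace (C g) = (\<Sum>c\<leftarrow>c2. c g)"
      using less.IH[OF _ C] k by auto
    show ?thesis using c1 c2 tr by (intro exI[of _ "c1 @ c2"]) auto
  qed
qed

end


section \<open>The regular representation and column orthogonality\<close>

text \<open>The regular representation, with the group enumerated by \<open>el\<close>: \<open>g\<close> sends the basis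
  vector of \<open>el j\<close> to that of \<open>g \<otimes> el j\<close>.\<close>

definition regular_rep :: "('a, 'b) monoid_scheme \<Rightarrow> (nat \<Rightarrow> 'a) \<Rightarrow> nat \<Rightarrow> 'a \<Rightarrow> complex mat" where
  "regular_rep G el N g = mat N N (\<lambda>(i,j). if el i = g \<otimes>\<^bsub>G\<^esub> el j then 1 else 0)"

context group
begin

lemma card_carrier_pos: "finite (carrier G) \<Longrightarrow> card (carrier G) > 0"
  using one_closed card_gt_0_iff by blast

lemma regular_rep_is_rep:
  assumes el: "bij_betw el {0..<N} (carrier G)"
  shows "is_rep G N (regular_rep G el N)"
proof -
  have elc: "\<And>i. i < N \<Longrightarrow> el i \<in> carrier G" and elinj: "\<And>i j. i < N \<Longrightarrow> j < N \<Longrightarrow> el i = el j \<Longrightarrow> i = j"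
    and elsurj: "\<And>y. y \<in> carrier G \<Longrightarrow> \<exists>i<N. el i = y"
    using el unfolding bij_betw_def inj_on_def by force+
  have mult: "regular_rep G el N (g \<otimes> h) = regular_rep G el N g * regular_rep G el N h"
    if g: "g \<in> carrier G" and h: "h \<in> carrier G" for g h
  proof (rule eq_matI)
    fix i j assume "i < dim_row (regular_rep G el N g * regular_rep G el N h)"
      "j < dim_col (regular_rep G el N g * regular_rep G el N h)"
    hence i: "i < N" and j: "j < N" unfolding regular_rep_def by auto
    obtain l0 where l0: "l0 < N" "el l0 = h \<otimes> el j" using elsurj[of "h \<otimes> el j"] h elc[OF j] by auto
    have "(regular_rep G el N g * regular_rep G el N h) $$ (i,j)
        = (\<Sum>l<N. (if el i = g \<otimes> el l then 1 else 0) * (if el l = h \<otimes> el j then 1 else 0))"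
      unfolding regular_rep_def using i j by (auto simp: scalar_prod_def lessThan_atLeast0 intro!: sum.cong)
    also have "\<dots> = (\<Sum>l<N. if l = l0 then (if el i = g \<otimes> el l0 then 1 else 0) else 0)"
      using elinj l0 by (intro sum.cong) auto
    also have "\<dots> = (if el i = g \<otimes> h \<otimes> el j then 1 else 0)" using l0 g h elc[OF j] by (simp add: m_assoc)
    finally show "regular_rep G el N (g \<otimes> h) $$ (i,j) = (regular_rep G el N g * regular_rep G el N h) $$ (i,j)"
      unfolding regular_rep_def using i j by simp
  qed (auto simp: regular_rep_def)
  have "regular_rep G el N \<one> = 1\<^sub>m N"
    using elc elinj unfolding regular_rep_def by (intro eq_matI) auto
  moreover have "0 < N" using elsurj[OF one_closed] by auto
  ultimately show ?thesis using mult unfolding is_rep_def by (auto simp: regular_rep_def)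
qed

lemma regular_rep_trace:
  assumes el: "bij_betw el {0..<N} (carrier G)" and g: "g \<in> carrier G"
  shows "mat_trace (regular_rep G el N g) = (if g = \<one> then of_nat N else 0)"
proof -
  have "el i = g \<otimes> el i \<longleftrightarrow> g = \<one>" if "i < N" for i
    using el that g unfolding bij_betw_def by (metis atLeastLessThan_iff image_eqI le0 r_cancel_one')
  thus ?thesis unfolding regular_rep_def mat_trace_def by simp
qed

lemma regular_char_decomp:
  assumes fin: "finite (carrier G)"
  obtains cs where "set cs \<subseteq> Irr G"
    "\<And>g. g \<in> carrier G \<Longrightarrow> (\<Sum>c\<leftarrow>cs. c g) = (if g = \<one> then of_nat (card (carrier G)) else 0)"
proof -
  obtain el where el: "bij_betw el {0..<card (carrier G)} (carrier G)"
    using ex_bij_betw_nat_finite[OF fin] by auto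
  obtain cs where "set cs \<subseteq> Irr G"
      "\<forall>g \<in> carrier G. mat_trace (regular_rep G el (card (carrier G)) g) = (\<Sum>c\<leftarrow>cs. c g)"
    using rep_char_decomp[OF regular_rep_is_rep[OF el]] by blast
  with that regular_rep_trace[OF el] show thesis by simp
qed

lemma Irr_degree:
  assumes chi: "\<chi> \<in> Irr G"
  obtains n where "n > 0" "\<chi> \<one> = of_nat n"
  using chi unfolding Irr_iff character_def is_rep_def irreducible_rep_def by auto

lemma Irr_norm_le:
  assumes fin: "finite (carrier G)" and chi: "\<chi> \<in> Irr G" and g: "g \<in> carrier G"
  shows "cmod (\<chi> g) \<le> Re (\<chi> \<one>)"
proof -
  obtain n \<rho> where r: "irreducible_rep G n \<rho>" and c: "\<chi> = character G \<rho>"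
    using chi unfolding Irr_iff by auto
  note isr = irreducible_rep_is_rep[OF r]
  show ?thesis
    using rep_trace_norm_le[OF fin isr g] rep_one[OF isr] g unfolding c character_def by simp
qed

end


definition class_fun :: "('a, 'b) monoid_scheme \<Rightarrow> ('a \<Rightarrow> complex) \<Rightarrow> bool" where
  "class_fun G f \<longleftrightarrow> (\<forall>g \<in> carrier G. \<forall>h \<in> carrier G. f (inv\<^bsub>G\<^esub> h \<otimes>\<^bsub>G\<^esub> g \<otimes>\<^bsub>G\<^esub> h) = f g)"

context group
begin

lemma Irr_class_fun: "\<chi> \<in> Irr G \<Longrightarrow> class_fun G \<chi>"
  unfolding Irr_iff class_fun_def character_def
  by (auto simp: rep_trace_conj dest: irreducible_rep_is_rep)

lemma class_fun_average_commutes: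
  assumes r: "is_rep G n \<rho>" and cf: "class_fun G f" and h: "h \<in> carrier G"
  shows "\<rho> h * mat_sum n n (\<lambda>g. f g \<cdot>\<^sub>m \<rho> (inv g)) (carrier G)
       = mat_sum n n (\<lambda>g. f g \<cdot>\<^sub>m \<rho> (inv g)) (carrier G) * \<rho> h"
proof -
  note rc = rep_carrier[OF r]
  have F: "f g \<cdot>\<^sub>m \<rho> (inv g) \<in> carrier_mat n n" if "g \<in> carrier G" for g
    using rc that by simp
  have "\<rho> h * mat_sum n n (\<lambda>g. f g \<cdot>\<^sub>m \<rho> (inv g)) (carrier G)
      = mat_sum n n (\<lambda>g. \<rho> h * (f g \<cdot>\<^sub>m \<rho> (inv g))) (carrier G)"
    using rc[OF h] F by (rule mat_sum_mult_left)
  also have "\<dots> = mat_sum n n (\<lambda>g. f g \<cdot>\<^sub>m \<rho> (h \<otimes> inv g)) (carrier G)"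
  proof (rule mat_sum_cong)
    fix g assume g: "g \<in> carrier G"
    show "\<rho> h * (f g \<cdot>\<^sub>m \<rho> (inv g)) = f g \<cdot>\<^sub>m \<rho> (h \<otimes> inv g)"
      using mult_smult_distrib[OF rc[OF h] rc[OF inv_closed[OF g]]] g h by (simp add: rep_mult[OF r])
  qed
  also have "\<dots> = mat_sum n n (\<lambda>g. f (inv h \<otimes> g \<otimes> h) \<cdot>\<^sub>m \<rho> (h \<otimes> inv (inv h \<otimes> g \<otimes> h))) (carrier G)"
    by (rule mat_sum_reindex[OF bij_betw_conj[OF h]])
  also have "\<dots> = mat_sum n n (\<lambda>g. f g \<cdot>\<^sub>m \<rho> (inv g \<otimes> h)) (carrier G)"
  proof (rule mat_sum_cong)
    fix g assume g: "g \<in> carrier G"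
    have "h \<otimes> inv (inv h \<otimes> g \<otimes> h) = inv g \<otimes> h"
      using g h by (simp add: inv_mult_group m_assoc[symmetric])
    thus "f (inv h \<otimes> g \<otimes> h) \<cdot>\<^sub>m \<rho> (h \<otimes> inv (inv h \<otimes> g \<otimes> h)) = f g \<cdot>\<^sub>m \<rho> (inv g \<otimes> h)"
      using cf g h unfolding class_fun_def by simp
  qed
  also have "\<dots> = mat_sum n n (\<lambda>g. f g \<cdot>\<^sub>m \<rho> (inv g) * \<rho> h) (carrier G)"
  proof (rule mat_sum_cong)
    fix g assume g: "g \<in> carrier G"
    show "f g \<cdot>\<^sub>m \<rho> (inv g \<otimes> h) = f g \<cdot>\<^sub>m \<rho> (inv g) * \<rho> h"
      using mult_smult_assoc_mat[OF rc[OF inv_closed[OF g]] rc[OF h]] g h by (simp add: rep_mult[OF r])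
  qed
  also have "\<dots> = mat_sum n n (\<lambda>g. f g \<cdot>\<^sub>m \<rho> (inv g)) (carrier G) * \<rho> h"
    using rc[OF h] F by (rule mat_sum_mult_right[symmetric])
  finally show ?thesis .
qed

lemma class_fun_convolution_Irr_zero:
  assumes fin: "finite (carrier G)" and cf: "class_fun G f"
    and orth: "\<forall>\<chi> \<in> Irr G. (\<Sum>g\<in>carrier G. f g * cnj (\<chi> g)) = 0"
    and chi: "\<chi> \<in> Irr G" and y: "y \<in> carrier G"
  shows "(\<Sum>g\<in>carrier G. f g * \<chi> (inv g \<otimes> y)) = 0"
proof -
  obtain n \<rho> where r: "irreducible_rep G n \<rho>" and c: "\<chi> = character G \<rho>"
    using chi unfolding Irr_iff by auto
  note isr = irreducible_rep_is_rep[OF r]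
  note rc = rep_carrier[OF isr]
  define T where "T = mat_sum n n (\<lambda>g. f g \<cdot>\<^sub>m \<rho> (inv g)) (carrier G)"
  obtain a where a: "T = a \<cdot>\<^sub>m 1\<^sub>m n"
    using schur_lemma_scalar[OF r _ class_fun_average_commutes[OF isr cf]] unfolding T_def by auto
  have "mat_trace T = (\<Sum>g\<in>carrier G. f g * cnj (\<chi> g))"
    unfolding T_def c character_def using rc
    by (simp add: mat_trace_mat_sum mat_trace_smult[of _ n] rep_trace_inv[OF fin isr])
  hence "a * of_nat n = 0" using orth chi unfolding a by (simp add: mat_trace_smult[of _ n])
  moreover have "n > 0" using isr unfolding is_rep_def by simp
  ultimately have T0: "T = 0\<^sub>m n n" using a by auto
  have "T * \<rho> y = mat_sum n n (\<lambda>g. f g \<cdot>\<^sub>m \<rho> (inv g) * \<rho> y) (carrier G)"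
    unfolding T_def using rc[OF y] by (rule mat_sum_mult_right) (use rc in simp)
  also have "\<dots> = mat_sum n n (\<lambda>g. f g \<cdot>\<^sub>m \<rho> (inv g \<otimes> y)) (carrier G)"
  proof (rule mat_sum_cong)
    fix g assume g: "g \<in> carrier G"
    show "f g \<cdot>\<^sub>m \<rho> (inv g) * \<rho> y = f g \<cdot>\<^sub>m \<rho> (inv g \<otimes> y)"
      using mult_smult_assoc_mat[OF rc[OF inv_closed[OF g]] rc[OF y]] g y by (simp add: rep_mult[OF isr])
  qed
  finally have "T * \<rho> y = mat_sum n n (\<lambda>g. f g \<cdot>\<^sub>m \<rho> (inv g \<otimes> y)) (carrier G)" .
  hence "mat_trace (T * \<rho> y) = (\<Sum>g\<in>carrier G. f g * \<chi> (inv g \<otimes> y))"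
    unfolding c character_def using rc y by (simp add: mat_trace_mat_sum mat_trace_smult[of _ n])
  thus ?thesis using T0 rc[OF y] by (simp add: mat_trace_def)
qed

lemma class_fun_orth_Irr_zero:
  assumes fin: "finite (carrier G)" and cf: "class_fun G f"
    and orth: "\<forall>\<chi> \<in> Irr G. (\<Sum>g\<in>carrier G. f g * cnj (\<chi> g)) = 0" and x: "x \<in> carrier G"
  shows "f x = 0"
proof -
  obtain cs where cs: "set cs \<subseteq> Irr G"
    and reg: "\<And>g. g \<in> carrier G \<Longrightarrow> (\<Sum>c\<leftarrow>cs. c g) = (if g = \<one> then of_nat (card (carrier G)) else 0)"
    using regular_char_decomp[OF fin] by blast
  have "(\<Sum>g\<in>carrier G. f g * (\<Sum>c\<leftarrow>cs. c (inv g \<otimes> x)))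
      = (\<Sum>g\<in>carrier G. if g = x then f x * of_nat (card (carrier G)) else 0)"
  proof (rule sum.cong[OF refl])
    fix g assume g: "g \<in> carrier G"
    have "inv g \<otimes> x = \<one> \<longleftrightarrow> g = x" using g x by (metis inv_closed inv_inv r_inv inv_equality)
    thus "f g * (\<Sum>c\<leftarrow>cs. c (inv g \<otimes> x)) = (if g = x then f x * of_nat (card (carrier G)) else 0)"
      using reg g x by auto
  qed
  also have "\<dots> = f x * of_nat (card (carrier G))" using x fin by simp
  finally have "f x * of_nat (card (carrier G)) = (\<Sum>g\<in>carrier G. f g * (\<Sum>c\<leftarrow>cs. c (inv g \<otimes> x)))" ..
  also have "\<dots> = (\<Sum>c\<leftarrow>cs. \<Sum>g\<in>carrier G. f g * c (inv g \<otimes> x))"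
    by (induction cs) (auto simp: sum.distrib distrib_left)
  also have "\<dots> = 0"
    using cs class_fun_convolution_Irr_zero[OF fin cf orth _ x] by (induction cs) auto
  finally show ?thesis using card_carrier_pos[OF fin] by simp
qed

end


context group
begin

lemma Irr_finite:
  assumes fin: "finite (carrier G)"
  shows "finite (Irr G)"
proof -
  obtain cs where cs: "set cs \<subseteq> Irr G"
    and reg: "\<And>g. g \<in> carrier G \<Longrightarrow> (\<Sum>c\<leftarrow>cs. c g) = (if g = \<one> then of_nat (card (carrier G)) else 0)"
    using regular_char_decomp[OF fin] by blast
  have "\<chi> \<in> set cs" if chi: "\<chi> \<in> Irr G" for \<chi>
  proof (rule ccontr)
    assume notin: "\<chi> \<notin> set cs"
    obtain n where n: "n > 0" "\<chi> \<one> = of_nat n" using Irr_degree[OF chi] .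
    have "(\<Sum>g\<in>carrier G. (\<Sum>c\<leftarrow>cs. c g) * cnj (\<chi> g))
        = (\<Sum>g\<in>carrier G. if g = \<one> then of_nat (card (carrier G)) * cnj (\<chi> \<one>) else 0)"
      using reg by (intro sum.cong) auto
    also have "\<dots> = of_nat (card (carrier G)) * of_nat n" using fin n by simp
    also have "(\<Sum>g\<in>carrier G. (\<Sum>c\<leftarrow>cs. c g) * cnj (\<chi> g)) = (\<Sum>c\<leftarrow>cs. \<Sum>g\<in>carrier G. c g * cnj (\<chi> g))"
      by (induction cs) (auto simp: sum.distrib distrib_right)
    also have "\<dots> = 0"
      using cs notin Irr_orth[OF fin _ chi] by (induction cs) auto
    finally show False using n card_carrier_pos[OF fin] by simp
  qed
  thus ?thesis by (meson finite_set finite_subset subsetI)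
qed

lemma class_fun_expansion:
  assumes fin: "finite (carrier G)" and cf: "class_fun G f" and x: "x \<in> carrier G"
  shows "f x = (\<Sum>\<chi>\<in>Irr G. (\<Sum>g\<in>carrier G. f g * cnj (\<chi> g)) / of_nat (card (carrier G)) * \<chi> x)"
proof -
  define N :: complex where "N = of_nat (card (carrier G))"
  have N0: "N \<noteq> 0" unfolding N_def using card_carrier_pos[OF fin] by simp
  define c where "c = (\<lambda>\<chi>. (\<Sum>g\<in>carrier G. f g * cnj (\<chi> g)) / N)"
  define f' where "f' = (\<lambda>y. f y - (\<Sum>\<chi>\<in>Irr G. c \<chi> * \<chi> y))"
  have "class_fun G f'"
    unfolding class_fun_def f'_def
  proof (intro ballI)
    fix g h assume g: "g \<in> carrier G" and h: "h \<in> carrier G"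
    have "(\<Sum>\<chi>\<in>Irr G. c \<chi> * \<chi> (inv h \<otimes> g \<otimes> h)) = (\<Sum>\<chi>\<in>Irr G. c \<chi> * \<chi> g)"
      using Irr_class_fun g h unfolding class_fun_def by (intro sum.cong) auto
    thus "f (inv h \<otimes> g \<otimes> h) - (\<Sum>\<chi>\<in>Irr G. c \<chi> * \<chi> (inv h \<otimes> g \<otimes> h))
        = f g - (\<Sum>\<chi>\<in>Irr G. c \<chi> * \<chi> g)"
      using cf g h unfolding class_fun_def by simp
  qed
  moreover have "\<forall>\<psi> \<in> Irr G. (\<Sum>g\<in>carrier G. f' g * cnj (\<psi> g)) = 0"
  proof
    fix \<psi> assume psi: "\<psi> \<in> Irr G"
    have "(\<Sum>g\<in>carrier G. (\<Sum>\<chi>\<in>Irr G. c \<chi> * \<chi> g) * cnj (\<psi> g))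
        = (\<Sum>g\<in>carrier G. \<Sum>\<chi>\<in>Irr G. c \<chi> * (\<chi> g * cnj (\<psi> g)))"
      by (simp add: sum_distrib_right mult.assoc)
    also have "\<dots> = (\<Sum>\<chi>\<in>Irr G. c \<chi> * (\<Sum>g\<in>carrier G. \<chi> g * cnj (\<psi> g)))"
      unfolding sum_distrib_left by (rule sum.swap)
    also have "\<dots> = (\<Sum>\<chi>\<in>Irr G. if \<chi> = \<psi> then c \<chi> * N else 0)"
      using Irr_orth[OF fin _ psi] unfolding N_def by (intro sum.cong) auto
    also have "\<dots> = c \<psi> * N" using Irr_finite[OF fin] psi by simp
    finally show "(\<Sum>g\<in>carrier G. f' g * cnj (\<psi> g)) = 0"
      unfolding f'_def using N0 by (simp add: left_diff_distrib sum_subtractf c_def)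
  qed
  ultimately have "f' x = 0" using class_fun_orth_Irr_zero[OF fin] x by blast
  thus ?thesis unfolding f'_def c_def N_def by simp
qed

lemma conj_class_subset: "x \<in> carrier G \<Longrightarrow> conj_class G x \<subseteq> carrier G"
  unfolding conj_class_def by auto

lemma conj_class_self: "x \<in> carrier G \<Longrightarrow> x \<in> conj_class G x"
  unfolding conj_class_def by (auto intro!: exI[of _ \<one>])

lemma conj_class_one: "conj_class G \<one> = {\<one>}"
  unfolding conj_class_def by (auto intro!: exI[of _ \<one>])

lemma card_conj_class_pos: "finite (carrier G) \<Longrightarrow> x \<in> carrier G \<Longrightarrow> card (conj_class G x) > 0"
  using finite_subset[OF conj_class_subset] conj_class_self card_gt_0_iff by blast

lemma class_fun_conj_class_indicator:
  assumes x: "x \<in> carrier G"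
  shows "class_fun G (\<lambda>y. if y \<in> conj_class G x then 1 else 0)"
proof -
  have "inv h \<otimes> g \<otimes> h \<in> conj_class G x \<longleftrightarrow> g \<in> conj_class G x"
    if g: "g \<in> carrier G" and h: "h \<in> carrier G" for g h
  proof
    assume "g \<in> conj_class G x"
    then obtain k where k: "k \<in> carrier G" "g = inv k \<otimes> x \<otimes> k" unfolding conj_class_def by auto
    hence "inv h \<otimes> g \<otimes> h = inv (k \<otimes> h) \<otimes> x \<otimes> (k \<otimes> h)"
      using x h by (simp add: inv_mult_group m_assoc)
    thus "inv h \<otimes> g \<otimes> h \<in> conj_class G x" unfolding conj_class_def using k h by blast
  next
    assume "inv h \<otimes> g \<otimes> h \<in> conj_class G x"
    then obtain k where k: "k \<in> carrier G" "inv h \<otimes> g \<otimes> h = inv k \<otimes> x \<otimes> k"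
      unfolding conj_class_def by auto
    have "g = h \<otimes> (inv h \<otimes> g \<otimes> h) \<otimes> inv h"
      using g h by (simp add: m_assoc[symmetric], simp add: m_assoc)
    also have "\<dots> = inv (k \<otimes> inv h) \<otimes> x \<otimes> (k \<otimes> inv h)"
      using k x h by (simp add: inv_mult_group m_assoc)
    finally show "g \<in> conj_class G x" unfolding conj_class_def using k h by blast
  qed
  thus ?thesis unfolding class_fun_def by simp
qed

lemma Irr_conj_class:
  assumes chi: "\<chi> \<in> Irr G" and x: "x \<in> carrier G" and y: "y \<in> conj_class G x"
  shows "\<chi> y = \<chi> x"
  using y Irr_class_fun[OF chi] x unfolding conj_class_def class_fun_def by auto

lemma column_orthogonality:
  assumes fin: "finite (carrier G)" and x: "x \<in> carrier G" and y: "y \<in> carrier G"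
  shows "(\<Sum>\<chi>\<in>Irr G. cnj (\<chi> x) * \<chi> y)
     = (if y \<in> conj_class G x then of_nat (card (carrier G)) / of_nat (card (conj_class G x)) else 0)"
proof -
  define K where "K = card (conj_class G x)"
  define N :: complex where "N = of_nat (card (carrier G))"
  have N0: "N \<noteq> 0" unfolding N_def using card_carrier_pos[OF fin] by simp
  have K0: "K > 0" unfolding K_def using card_conj_class_pos[OF fin x] .
  define f :: "'a \<Rightarrow> complex" where "f = (\<lambda>y. if y \<in> conj_class G x then 1 else 0)"
  have ip: "(\<Sum>g\<in>carrier G. f g * cnj (\<chi> g)) = of_nat K * cnj (\<chi> x)" if chi: "\<chi> \<in> Irr G" for \<chi>
  proof -
    have "(\<Sum>g\<in>carrier G. f g * cnj (\<chi> g)) = (\<Sum>g\<in>carrier G. if g \<in> conj_class G x then cnj (\<chi> g) else 0)"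
      unfolding f_def by (intro sum.cong) auto
    also have "\<dots> = (\<Sum>g\<in>conj_class G x. cnj (\<chi> g))"
      using fin conj_class_subset[OF x] by (simp add: sum.inter_restrict[symmetric] Int_absorb1)
    also have "\<dots> = of_nat K * cnj (\<chi> x)"
      using Irr_conj_class[OF chi x] unfolding K_def by simp
    finally show ?thesis .
  qed
  have "f y = (\<Sum>\<chi>\<in>Irr G. (\<Sum>g\<in>carrier G. f g * cnj (\<chi> g)) / N * \<chi> y)"
    unfolding f_def N_def by (rule class_fun_expansion[OF fin class_fun_conj_class_indicator[OF x] y])
  also have "\<dots> = (\<Sum>\<chi>\<in>Irr G. of_nat K / N * (cnj (\<chi> x) * \<chi> y))"
    using ip by (intro sum.cong) auto
  also have "\<dots> = of_nat K / N * (\<Sum>\<chi>\<in>Irr G. cnj (\<chi> x) * \<chi> y)"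
    by (simp add: sum_distrib_left)
  finally have "(\<Sum>\<chi>\<in>Irr G. cnj (\<chi> x) * \<chi> y) = N / of_nat K * f y"
    using N0 K0 by (simp add: field_simps)
  thus ?thesis unfolding f_def N_def K_def by simp
qed

end


section \<open>Bounds on \<open>D\<^sub>H\<close>\<close>

context group
begin

lemma sum_Irr_norm_sq:
  assumes fin: "finite (carrier G)" and y: "y \<in> carrier G"
  shows "(\<Sum>\<chi>\<in>Irr G. (cmod (\<chi> y))\<^sup>2) = real (card (carrier G)) / real (card (conj_class G y))"
proof -
  have "complex_of_real (\<Sum>\<chi>\<in>Irr G. (cmod (\<chi> y))\<^sup>2) = (\<Sum>\<chi>\<in>Irr G. cnj (\<chi> y) * \<chi> y)"
    unfolding of_real_sum by (intro sum.cong refl) (metis complex_norm_square mult.commute)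
  also have "\<dots> = complex_of_real (real (card (carrier G)) / real (card (conj_class G y)))"
    using column_orthogonality[OF fin y y] conj_class_self[OF y] by simp
  finally show ?thesis by (simp only: of_real_eq_iff)
qed

lemma sum_Irr_degree_sq:
  assumes fin: "finite (carrier G)"
  shows "(\<Sum>\<chi>\<in>Irr G. (Re (\<chi> \<one>))\<^sup>2) = real (card (carrier G))"
proof -
  have "(Re (\<chi> \<one>))\<^sup>2 = (cmod (\<chi> \<one>))\<^sup>2" if "\<chi> \<in> Irr G" for \<chi>
    using Irr_degree[OF that] by (metis Re_complex_of_real norm_of_nat of_real_of_nat_eq)
  thus ?thesis using sum_Irr_norm_sq[OF fin one_closed] conj_class_one by simp
qed

lemma sum_Irr_degree_norm_le:
  assumes fin: "finite (carrier G)" and h: "h \<in> carrier G"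
  shows "(\<Sum>\<chi>\<in>Irr G. Re (\<chi> \<one>) * cmod (\<chi> h)) \<le> real (card (carrier G)) / sqrt (real (card (conj_class G h)))"
proof -
  let ?N = "real (card (carrier G))" and ?K = "real (card (conj_class G h))"
  have "(\<Sum>\<chi>\<in>Irr G. Re (\<chi> \<one>) * cmod (\<chi> h))
      \<le> sqrt ((\<Sum>\<chi>\<in>Irr G. (Re (\<chi> \<one>))\<^sup>2) * (\<Sum>\<chi>\<in>Irr G. (cmod (\<chi> h))\<^sup>2))"
    by (rule real_le_rsqrt[OF Cauchy_Schwarz_ineq_sum])
  also have "\<dots> = sqrt (?N * (?N / ?K))"
    using sum_Irr_degree_sq[OF fin] sum_Irr_norm_sq[OF fin h] by simp
  also have "\<dots> = ?N / sqrt ?K"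
    using card_conj_class_pos[OF fin h] by (simp add: real_sqrt_mult real_sqrt_divide)
  finally show ?thesis .
qed

lemma D_upper_bound:
  assumes fin: "finite (carrier G)" and H: "subgroup H G" and K: "K > 0"
    and min: "\<And>y. y \<in> H \<Longrightarrow> y \<noteq> \<one> \<Longrightarrow> K \<le> card (conj_class G y)"
  shows "D G H \<le> (real (card H) - 1) / sqrt (real K)"
proof -
  let ?N = "real (card (carrier G))"
  have Hc: "H \<subseteq> carrier G" using subgroup.subset[OF H] .
  have finH: "finite H" using finite_subset[OF Hc fin] .
  have deg: "Re (\<chi> \<one>) \<ge> 0" if chi: "\<chi> \<in> Irr G" for \<chi>
  proof -
    obtain n where "n > 0" "\<chi> \<one> = of_nat n" using Irr_degree[OF chi] .
    thus ?thesis by simp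
  qed
  have "(\<Sum>\<chi>\<in>Irr G. Re (\<chi> \<one>) * cmod (\<Sum>h\<in>H - {\<one>}. \<chi> h))
      \<le> (\<Sum>\<chi>\<in>Irr G. Re (\<chi> \<one>) * (\<Sum>h\<in>H - {\<one>}. cmod (\<chi> h)))"
    by (intro sum_mono mult_left_mono norm_sum deg)
  also have "\<dots> = (\<Sum>h\<in>H - {\<one>}. \<Sum>\<chi>\<in>Irr G. Re (\<chi> \<one>) * cmod (\<chi> h))"
    by (simp add: sum_distrib_left sum.swap[of _ "Irr G"])
  also have "\<dots> \<le> (\<Sum>h\<in>H - {\<one>}. ?N / sqrt (real K))"
  proof (rule sum_mono)
    fix h assume h: "h \<in> H - {\<one>}"
    hence hc: "h \<in> carrier G" using Hc by auto
    have "sqrt (real K) \<le> sqrt (real (card (conj_class G h)))" using min h by simp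
    hence "?N / sqrt (real (card (conj_class G h))) \<le> ?N / sqrt (real K)"
      using K by (intro divide_left_mono) auto
    thus "(\<Sum>\<chi>\<in>Irr G. Re (\<chi> \<one>) * cmod (\<chi> h)) \<le> ?N / sqrt (real K)"
      using sum_Irr_degree_norm_le[OF fin hc] by linarith
  qed
  also have "\<dots> = (real (card H) - 1) * ?N / sqrt (real K)"
  proof -
    have "card H \<ge> 1" using finH subgroup.one_closed[OF H] by (auto simp: Suc_le_eq card_gt_0_iff)
    thus ?thesis using finH subgroup.one_closed[OF H] by (simp add: card_Diff_singleton)
  qed
  finally have "D G H \<le> (1 / ?N) * ((real (card H) - 1) * ?N / sqrt (real K))"
    unfolding D_def using card_carrier_pos[OF fin] by (intro mult_left_mono) auto
  thus ?thesis using card_carrier_pos[OF fin] by simp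
qed

lemma D_lower_bound:
  assumes fin: "finite (carrier G)" and H: "subgroup H G" and x: "x \<in> H" "x \<noteq> \<one>"
  shows "1 / real (card (conj_class G x)) \<le> D G H"
proof -
  let ?N = "real (card (carrier G))" and ?K = "real (card (conj_class G x))"
  have Hc: "H \<subseteq> carrier G" using subgroup.subset[OF H] .
  have finH: "finite (H - {\<one>})" using finite_subset[OF Hc fin] by simp
  have xc: "x \<in> carrier G" using x Hc by auto
  have K0: "?K > 0" using card_conj_class_pos[OF fin xc] by simp
  have "(\<Sum>\<chi>\<in>Irr G. cnj (\<chi> x) * (\<Sum>h\<in>H - {\<one>}. \<chi> h))
      = (\<Sum>h\<in>H - {\<one>}. \<Sum>\<chi>\<in>Irr G. cnj (\<chi> x) * \<chi> h)"
    by (simp add: sum_distrib_left sum.swap[of _ "Irr G"])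
  also have "\<dots> = (\<Sum>h\<in>H - {\<one>}. if h \<in> conj_class G x then of_real (?N / ?K) else 0)"
    using column_orthogonality[OF fin xc] Hc by (intro sum.cong refl) auto
  also have "\<dots> = of_nat (card ((H - {\<one>}) \<inter> conj_class G x)) * of_real (?N / ?K)"
    using finH by (simp add: sum.If_cases)
  finally have orth: "(\<Sum>\<chi>\<in>Irr G. cnj (\<chi> x) * (\<Sum>h\<in>H - {\<one>}. \<chi> h))
      = of_nat (card ((H - {\<one>}) \<inter> conj_class G x)) * of_real (?N / ?K)" .
  have "x \<in> (H - {\<one>}) \<inter> conj_class G x" using x conj_class_self[OF xc] by simp
  hence "card ((H - {\<one>}) \<inter> conj_class G x) \<ge> 1" using finH by (auto simp: Suc_le_eq card_gt_0_iff)
  hence "?N / ?K \<le> real (card ((H - {\<one>}) \<inter> conj_class G x)) * (?N / ?K)"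
    using mult_right_mono[of 1 _ "?N / ?K"] by simp
  also have "\<dots> = cmod (\<Sum>\<chi>\<in>Irr G. cnj (\<chi> x) * (\<Sum>h\<in>H - {\<one>}. \<chi> h))"
    unfolding orth by (simp add: norm_mult norm_divide)
  also have "\<dots> \<le> (\<Sum>\<chi>\<in>Irr G. cmod (\<chi> x) * cmod (\<Sum>h\<in>H - {\<one>}. \<chi> h))"
    by (rule order_trans[OF norm_sum]) (simp add: norm_mult)
  also have "\<dots> \<le> (\<Sum>\<chi>\<in>Irr G. Re (\<chi> \<one>) * cmod (\<Sum>h\<in>H - {\<one>}. \<chi> h))"
    using Irr_norm_le[OF fin _ xc] by (intro sum_mono mult_right_mono) auto
  finally have "(1 / ?N) * (?N / ?K) \<le> D G H"
    unfolding D_def using card_carrier_pos[OF fin] by (intro mult_left_mono) auto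
  thus ?thesis using card_carrier_pos[OF fin] by simp
qed

end

theorem corollary1:
  fixes G :: "('a, 'b) monoid_scheme" and H :: "'a set" and x :: 'a
  assumes "group G" and "finite (carrier G)"
    and "subgroup H G" and "H \<noteq> {\<one>\<^bsub>G\<^esub>}"
    and "x \<in> H" and "x \<noteq> \<one>\<^bsub>G\<^esub>"
    and "\<forall>y \<in> H. y \<noteq> \<one>\<^bsub>G\<^esub> \<longrightarrow> card (conj_class G x) \<le> card (conj_class G y)"
  shows "1 / (real (card H) * real (card (conj_class G x))) < D G H
       \<and> D G H \<le> (real (card H) - 1) / sqrt (real (card (conj_class G x)))"
proof -
  interpret group G by fact
  have xc: "x \<in> carrier G" using assms(3,5) subgroup.subset by blast
  have K0: "card (conj_class G x) > 0" using card_conj_class_pos[OF assms(2) xc] .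
  have "card H \<ge> 2"
  proof -
    have "{\<one>\<^bsub>G\<^esub>, x} \<subseteq> H" using assms(3,5) subgroup.one_closed by blast
    hence "card {\<one>\<^bsub>G\<^esub>, x} \<le> card H"
      using card_mono finite_subset[OF subgroup.subset[OF assms(3)] assms(2)] by blast
    thus ?thesis using assms(6) by simp
  qed
  hence "1 / (real (card H) * real (card (conj_class G x))) < 1 / real (card (conj_class G x))"
    using K0 by (simp add: field_simps)
  also have "\<dots> \<le> D G H" using D_lower_bound[OF assms(2,3,5,6)] .
  finally show ?thesis
    using D_upper_bound[OF assms(2,3) K0] assms(7) by simp
qed

end
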